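(* Let $q,r,\mu,\nu$ be positive integers with $\nu\ge q+r$. Let $\bar{\mathcal{K}}_*^{\mu-1}(z)$ be the matrix $\bar{\mathcal{K}}^{\mu-1}(z)$ defined below for the parameter value $\nu_*=q+r-1$ in place of $\nu$, and put \[ \bar{\bar{\mathcal{K}}}^{\mu-1}(z)=\begin{pmatrix}\bar{\mathcal{K}}_*^{\mu-1}(z)&0\\0&I_{r(\nu-q-r+1)}\end{pmatrix}. \] Then the kernel of $\mathcal{N}(z)$ is spanned by the columns of $\bar{\bar{\mathcal{K}}}^{\mu-1}(z)$ and has dimension $\nu r-\mu q$ if $\mu<r$ and $(\nu-q)r$ if $\mu\ge r$; that is, $\dim\ker\mathcal{N}(z)=\nu r-q\min\{\mu,r\}$.
   Context: Matrix indices start at $0$; $'$ and $^{(j)}$ denote $z$-derivatives. $u(z)=(1,\dots,z^{q-1})^\top$, $w(z)=(1,\dots,z^{r-1})$, $M(z)=u(z)w(z)$; $\mathcal{N}(z)\in\mathbb{C}^{\mu q\times\nu r}$ is the block matrix with $(i,j)$ block $\frac{1}{i!j!}M^{(i+j)}(z)$. Construction of $\bar{\mathcal{K}}^{\mu-1}$ for a parameter $\nu'$ with $q+1\le\nu'\le q+r-1$ (here $\nu'=\nu_*=q+r-1$, requiring $r\ge2$): $S_n$ is the $n\times n$ shift matrix $(S_n)_{ij}=\delta_{i+1,j}$; $\ell_q$ is the last standard basis vector of $\mathbb{R}^q$, $\varphi$ the first standard basis vector of $\mathbb{R}^{\nu'-q}$; $G(z)\in\mathbb{C}^{r\times r}$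 has entries $G_{ij}=z^{j-i-1}$ for $j>i$, $0$ otherwise; $G_{j0}(z)$ is the matrix of the first $r-j$ rows of $G(z)$; $F_j(z)\in\mathbb{C}^{(r-j)\times(r-j-1)}$ ($0\le j\le r-2$) has $(F_j)_{ii}=-z$, $(F_j)_{i+1,i}=1$, zero otherwise. For $0\le j\le r-2$, $\bar K_j=\begin{pmatrix} I_q\otimes F_j+S_q\otimes F_j' & -(\ell_q\varphi^\top)\otimes \frac{1}{j!}G_{j0}^{(j)}\\ 0 & I_{\nu'-q}\otimes I_r-S_{\nu'-q}\otimes G\end{pmatrix}$; $\bar K_{r-1}=\begin{pmatrix}0_{q\times(\nu'-q)r}\\ I_{\nu'-q}\otimes I_r-S_{\nu'-q}\otimes G\end{pmatrix}$; $\bar K_j=I_{\nu'-q}\otimes I_r-S_{\nu'-q}\otimes G$ for $j\ge r$; and $\bar{\mathcal{K}}^{\mu-1}=\bar K_0\bar K_1\cdots\bar K_{\mu-1}$. *)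

theory Defs
  imports "Jordan_Normal_Form.Matrix_Kernel" "HOL-Computational_Algebra.Polynomial"
begin

(* Matrices are Jordan_Normal_Form matrices over complex numbers; all indices start at 0.
   Matrix-valued polynomial functions of z are represented as matrices of polynomials;
   the k-th z-derivative evaluated at z is taken entrywise. *)

definition mderiv :: "nat \<Rightarrow> complex poly mat \<Rightarrow> complex \<Rightarrow> complex mat" where
  "mderiv k P z = map_mat (\<lambda>p. poly ((pderiv ^^ k) p) z) P"

definition upoly :: "nat \<Rightarrow> complex poly mat" where
  "upoly q = mat q 1 (\<lambda>(a,_). [:0,1:] ^ a)"

definition wpoly :: "nat \<Rightarrow> complex poly mat" where
  "wpoly r = mat 1 r (\<lambda>(_,b). [:0,1:] ^ b)"

definition Mpoly :: "nat \<Rightarrow> nat \<Rightarrow> complex poly mat" where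
  "Mpoly q r = upoly q * wpoly r"

(* N(z): (mu q) x (nu r) block matrix, block (i,j) = M^(i+j)(z) / (i! j!) *)
definition Nmat :: "nat \<Rightarrow> nat \<Rightarrow> nat \<Rightarrow> nat \<Rightarrow> complex \<Rightarrow> complex mat" where
  "Nmat q r mu nu z = mat (mu * q) (nu * r)
     (\<lambda>(i,j). mderiv (i div q + j div r) (Mpoly q r) z $$ (i mod q, j mod r)
              / (fact (i div q) * fact (j div r)))"

definition kron :: "'a :: times mat \<Rightarrow> 'a mat \<Rightarrow> 'a mat" where
  "kron A B = mat (dim_row A * dim_row B) (dim_col A * dim_col B)
     (\<lambda>(i,j). A $$ (i div dim_row B, j div dim_col B) * B $$ (i mod dim_row B, j mod dim_col B))"

definition shift_mat :: "nat \<Rightarrow> complex mat" where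
  "shift_mat n = mat n n (\<lambda>(i,j). if i + 1 = j then 1 else 0)"

definition Gpoly :: "nat \<Rightarrow> complex poly mat" where
  "Gpoly r = mat r r (\<lambda>(i,j). if i < j then [:0,1:] ^ (j - i - 1) else 0)"

definition Gj0_deriv :: "nat \<Rightarrow> nat \<Rightarrow> complex \<Rightarrow> complex mat" where
  "Gj0_deriv r j z = mat (r - j) r (\<lambda>(a,b). mderiv j (Gpoly r) z $$ (a,b))"

definition Fpoly :: "nat \<Rightarrow> nat \<Rightarrow> complex poly mat" where
  "Fpoly r j = mat (r - j) (r - j - 1)
     (\<lambda>(a,b). if a = b then [:0,-1:] else if a = b + 1 then 1 else 0)"

definition Dblock :: "nat \<Rightarrow> nat \<Rightarrow> nat \<Rightarrow> complex \<Rightarrow> complex mat" where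
  "Dblock q r nu' z = kron (1\<^sub>m (nu' - q)) (1\<^sub>m r) - kron (shift_mat (nu' - q)) (mderiv 0 (Gpoly r) z)"

definition ellphi :: "nat \<Rightarrow> nat \<Rightarrow> complex mat" where
  "ellphi q nu' = mat_of_cols q [unit_vec q (q - 1)] * mat_of_rows (nu' - q) [unit_vec (nu' - q) 0]"

definition Kbar :: "nat \<Rightarrow> nat \<Rightarrow> nat \<Rightarrow> complex \<Rightarrow> nat \<Rightarrow> complex mat" where
  "Kbar q r nu' z j =
    (if j + 2 \<le> r then
       four_block_mat
         (kron (1\<^sub>m q) (mderiv 0 (Fpoly r j) z) + kron (shift_mat q) (mderiv 1 (Fpoly r j) z))
         (- kron (ellphi q nu') ((1 / fact j) \<cdot>\<^sub>m Gj0_deriv r j z))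
         (0\<^sub>m ((nu' - q) * r) (q * (r - j - 1)))
         (Dblock q r nu' z)
     else if j + 1 = r then
       four_block_mat
         (0\<^sub>m q 0) (0\<^sub>m q ((nu' - q) * r))
         (0\<^sub>m ((nu' - q) * r) 0) (Dblock q r nu' z)
     else Dblock q r nu' z)"

(* Kprod q r nu' z m = Kbar_0 * Kbar_1 * ... * Kbar_m, i.e. \bar{\mathcal K}^m *)
fun Kprod :: "nat \<Rightarrow> nat \<Rightarrow> nat \<Rightarrow> complex \<Rightarrow> nat \<Rightarrow> complex mat" where
  "Kprod q r nu' z 0 = Kbar q r nu' z 0"
| "Kprod q r nu' z (Suc m) = Kprod q r nu' z m * Kbar q r nu' z (Suc m)"

definition Kbarbar :: "nat \<Rightarrow> nat \<Rightarrow> nat \<Rightarrow> nat \<Rightarrow> complex \<Rightarrow> complex mat" where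
  "Kbarbar q r mu nu z =
    (let K = Kprod q r (q + r - 1) z (mu - 1); s = r * (nu - q - r + 1) in
     four_block_mat K (0\<^sub>m (dim_row K) s) (0\<^sub>m s (dim_col K)) (1\<^sub>m s))"

end

(* Encode x in C^(nu r) by the polynomials X_k(t) = sum_b x_(k r + b) t^b of its nu blocks.
   Row (i, a) of N(z) x is the i-th Hasse derivative at z of Psi_a = sum_k D^(k) (t^a X_k),
   so x lies in the kernel iff (t - z)^mu divides Psi_a for every a < q.  On block polynomials,
   F_j multiplies by t - z, F_j' by -1, G^(j)_j0 / j! divides by (t - z)^(j+1), and I - S (x) G
   is a backward substitution; with the blocks suitably normalised, applying Kbar_j multiplies
   every Psi_a by t - z (a telescoping sum).  Hence the columns of the block matrix lie in the
   kernel; the identity block only feeds blocks k >= q + r - 1, which do not enter Psi_a for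
   degree reasons.  The columns are independent since every Kbar_j is injective.  Finally, the
   coordinates x_(k r + b) with k < q and b < min mu r span a complement of the kernel: there
   the X_k have degree < mu, and (t - z)^mu | Psi_a for all a < q forces them to vanish. *)

theory Submission
  imports Defs "Jordan_Normal_Form.DL_Rank"
begin

section \<open>Hasse derivatives\<close>

definition hasse_deriv :: "nat \<Rightarrow> 'a::field_char_0 poly \<Rightarrow> 'a poly" where
  "hasse_deriv k p = Polynomial.smult (1 / fact k) ((pderiv ^^ k) p)"

lemma hasse_deriv_0 [simp]: "hasse_deriv 0 p = p"
  by (simp add: hasse_deriv_def)

lemma hasse_deriv_zero [simp]: "hasse_deriv k 0 = 0"
  by (simp add: hasse_deriv_def)

lemma hasse_deriv_add: "hasse_deriv k (p + q) = hasse_deriv k p + hasse_deriv k q"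
  by (simp add: hasse_deriv_def higher_pderiv_add smult_add_right)

lemma hasse_deriv_smult: "hasse_deriv k (Polynomial.smult c p) = Polynomial.smult c (hasse_deriv k p)"
  by (simp add: hasse_deriv_def higher_pderiv_smult mult.commute)

lemma hasse_deriv_minus: "hasse_deriv k (- p) = - hasse_deriv k p"
  using hasse_deriv_smult[of k "- 1" p] by simp

lemma hasse_deriv_diff: "hasse_deriv k (p - q) = hasse_deriv k p - hasse_deriv k q"
  using hasse_deriv_add[of k p "- q"] by (simp add: hasse_deriv_minus)

lemma smult_sum_right: "Polynomial.smult c (sum f A) = (\<Sum>x\<in>A. Polynomial.smult c (f x))"
  by (induction A rule: infinite_finite_induct) (simp_all add: smult_add_right)

lemma hasse_deriv_sum: "hasse_deriv k (sum f A) = (\<Sum>x\<in>A. hasse_deriv k (f x))"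
  by (simp add: hasse_deriv_def higher_pderiv_sum smult_sum_right)

lemma hasse_deriv_eq_0:
  assumes "degree p < k" shows "hasse_deriv k p = 0"
proof -
  have "coeff ((pderiv ^^ k) p) n = 0" for n
    using assms by (simp add: coeff_higher_pderiv coeff_eq_0)
  then show ?thesis by (simp add: hasse_deriv_def poly_eq_iff)
qed

lemma pderiv_linear_mult: "pderiv ([:-z,1:] * p) = [:-z,1:] * pderiv p + (p :: 'a::idom poly)"
  by (subst pderiv_mult) (simp add: pderiv_pCons)

lemma higher_pderiv_linear_mult:
  fixes p :: "'a::idom poly"
  shows "(pderiv ^^ Suc k) ([:-z,1:] * p) =
    [:-z,1:] * (pderiv ^^ Suc k) p + Polynomial.smult (of_nat (Suc k)) ((pderiv ^^ k) p)"
proof (induction k)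
  case 0
  show ?case using pderiv_linear_mult[of z p] by simp
next
  case (Suc k)
  have "(pderiv ^^ Suc (Suc k)) ([:-z,1:] * p) = pderiv ((pderiv ^^ Suc k) ([:-z,1:] * p))"
    by simp
  also have "\<dots> = pderiv ([:-z,1:] * (pderiv ^^ Suc k) p + Polynomial.smult (of_nat (Suc k)) ((pderiv ^^ k) p))"
    using Suc.IH by (rule arg_cong)
  also have "\<dots> = [:-z,1:] * (pderiv ^^ Suc (Suc k)) p + (pderiv ^^ Suc k) p
      + Polynomial.smult (of_nat (Suc k)) ((pderiv ^^ Suc k) p)"
    using pderiv_linear_mult[of z "(pderiv ^^ Suc k) p"] by (simp add: pderiv_add pderiv_smult)
  also have "\<dots> = [:-z,1:] * (pderiv ^^ Suc (Suc k)) p + Polynomial.smult (of_nat (Suc (Suc k))) ((pderiv ^^ Suc k) p)"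
    by (simp only: of_nat_Suc[of "Suc k"] smult_add_left smult_1_left add.assoc)
  finally show ?case .
qed

lemma hasse_deriv_linear_mult:
  "hasse_deriv (Suc k) ([:-z,1:] * p) = [:-z,1:] * hasse_deriv (Suc k) p + hasse_deriv k p"
proof -
  have "(1 / fact (Suc k)) * of_nat (Suc k) = (1 / fact k :: 'a)"
    by (simp add: divide_simps del: of_nat_Suc)
  then show ?thesis
    unfolding hasse_deriv_def higher_pderiv_linear_mult smult_add_right mult_smult_right smult_smult
    by simp
qed

lemma poly_hasse_deriv_eq_0_iff_dvd:
  "(\<forall>i<m. poly (hasse_deriv i p) z = 0) \<longleftrightarrow> [:-z,1:] ^ m dvd p"
proof (induction m arbitrary: p)
  case 0
  then show ?case by simp
next
  case (Suc m)
  show ?case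
  proof (cases "poly p z = 0")
    case True
    then obtain g where p: "p = [:-z,1:] * g" by (auto simp: poly_eq_0_iff_dvd elim: dvdE)
    have "(\<forall>i<Suc m. poly (hasse_deriv i p) z = 0) \<longleftrightarrow> (\<forall>i<m. poly (hasse_deriv i g) z = 0)"
      using True by (auto simp: less_Suc_eq_0_disj p hasse_deriv_linear_mult simp del: mult_pCons_left)
    also have "\<dots> \<longleftrightarrow> [:-z,1:] ^ Suc m dvd p"
      unfolding p power_Suc Suc.IH by (simp del: mult_pCons_left)
    finally show ?thesis .
  next
    case False
    have "[:-z,1:] dvd [:-z,1:] ^ Suc m"
      by (simp only: power_Suc dvd_triv_left)
    then have "\<not> [:-z,1:] ^ Suc m dvd p"
      using False dvd_trans poly_eq_0_iff_dvd by blast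
    then show ?thesis using False by auto
  qed
qed

lemma hasse_deriv_hasse_deriv:
  "hasse_deriv i (hasse_deriv k p) = Polynomial.smult (1 / (fact i * fact k)) ((pderiv ^^ (i + k)) p)"
  by (simp add: hasse_deriv_def higher_pderiv_smult funpow_add mult.commute)

lemma higher_pderiv_monomial:
  "(pderiv ^^ j) ([:0,1:] ^ m) =
    Polynomial.smult (fact j * of_nat (m choose j)) ([:0,1:] ^ (m - j) :: 'a::field_char_0 poly)"
proof (induction j arbitrary: m)
  case 0
  then show ?case by simp
next
  case (Suc j)
  have "(pderiv ^^ Suc j) ([:0,1:] ^ m) = (pderiv ^^ j) (pderiv ([:0,1:] ^ m) :: 'a poly)"
    by (simp only: funpow_Suc_right comp_apply)
  also have "\<dots> = Polynomial.smult (of_nat m * (fact j * of_nat ((m - 1) choose j))) ([:0,1:] ^ (m - 1 - j))"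
    by (simp add: pderiv_power pderiv_pCons higher_pderiv_smult Suc.IH)
  also have "of_nat m * (fact j * of_nat ((m - 1) choose j)) = (fact (Suc j) * of_nat (m choose Suc j) :: 'a)"
  proof (cases m)
    case (Suc n)
    have "(of_nat (Suc j) * of_nat (Suc n choose Suc j) :: 'a) = of_nat (Suc n) * of_nat (n choose j)"
      by (metis Suc_times_binomial of_nat_mult)
    then show ?thesis using Suc by (simp add: fact_Suc algebra_simps del: of_nat_Suc binomial_Suc_Suc)
  qed simp
  finally show ?case by simp
qed

lemma poly_hasse_deriv_monomial:
  "poly (hasse_deriv j ([:0,1:] ^ m)) z = of_nat (m choose j) * (z :: 'a::field_char_0) ^ (m - j)"
  by (simp add: hasse_deriv_def higher_pderiv_monomial)

section \<open>Hasse pairings\<close>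

definition hasse_pairing :: "nat \<Rightarrow> (nat \<Rightarrow> 'a::field_char_0 poly) \<Rightarrow> 'a poly \<Rightarrow> 'a poly" where
  "hasse_pairing K U p = (\<Sum>k<K. hasse_deriv k (p * U k))"

lemma hasse_pairing_linear_mult:
  "hasse_pairing (Suc K) U ([:-z,1:] * p) =
    [:-z,1:] * hasse_pairing (Suc K) U p + hasse_pairing K (\<lambda>k. U (Suc k)) p"
proof -
  have "hasse_deriv (Suc k) ([:-z,1:] * p * U (Suc k)) =
      [:-z,1:] * hasse_deriv (Suc k) (p * U (Suc k)) + hasse_deriv k (p * U (Suc k))" for k
    using hasse_deriv_linear_mult[of k z "p * U (Suc k)"] by (simp only: mult.assoc)
  then show ?thesis
    unfolding hasse_pairing_def sum.lessThan_Suc_shift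
    by (simp add: sum.distrib sum_distrib_left algebra_simps del: mult_pCons_left)
qed

lemma hasse_pairing_add_fun:
  "hasse_pairing K (\<lambda>k. U k + V k) p = hasse_pairing K U p + hasse_pairing K V p"
  by (simp add: hasse_pairing_def distrib_left hasse_deriv_add sum.distrib)

lemma hasse_pairing_telescope:
  assumes "U K = 0"
  shows "hasse_pairing K (\<lambda>k. [:-z,1:] * U k - U (Suc k)) p = [:-z,1:] * hasse_pairing K U p"
proof (cases K)
  case 0
  then show ?thesis by (simp add: hasse_pairing_def)
next
  case (Suc K')
  have "hasse_pairing K (\<lambda>k. [:-z,1:] * U k - U (Suc k)) p =
      hasse_pairing K U ([:-z,1:] * p) - hasse_pairing K (\<lambda>k. U (Suc k)) p"
    by (simp add: hasse_pairing_def right_diff_distrib hasse_deriv_diff sum_subtractf ac_simps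
        del: mult_pCons_left)
  also have "hasse_pairing K (\<lambda>k. U (Suc k)) p = hasse_pairing K' (\<lambda>k. U (Suc k)) p"
    using assms Suc by (simp add: hasse_pairing_def)
  finally show ?thesis
    using Suc by (simp add: hasse_pairing_linear_mult del: mult_pCons_left)
qed

lemma hasse_pairing_truncate:
  assumes "K \<le> L" and "\<And>k. K \<le> k \<Longrightarrow> k < L \<Longrightarrow> hasse_deriv k (p * U k) = 0"
  shows "hasse_pairing L U p = hasse_pairing K U p"
proof -
  have "hasse_pairing L U p = hasse_pairing K U p + (\<Sum>k\<in>{K..<L}. hasse_deriv k (p * U k))"
    unfolding hasse_pairing_def lessThan_atLeast0
    by (metis sum.atLeastLessThan_concat[OF _ assms(1)] zero_le)
  also have "(\<Sum>k\<in>{K..<L}. hasse_deriv k (p * U k)) = 0"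
    using assms(2) by (intro sum.neutral) auto
  finally show ?thesis by simp
qed

lemma hasse_pairing_sum: "hasse_pairing K U (sum f A) = (\<Sum>a\<in>A. hasse_pairing K U (f a))"
  unfolding hasse_pairing_def by (simp add: sum_distrib_right hasse_deriv_sum) (rule sum.swap)

lemma hasse_pairing_smult:
  "hasse_pairing K U (Polynomial.smult c p) = Polynomial.smult c (hasse_pairing K U p)"
  by (simp add: hasse_pairing_def hasse_deriv_smult smult_sum_right)

lemma hasse_pairing_dvd_if_dvd_monomials:
  assumes dvd: "\<And>a. a < n \<Longrightarrow> d dvd hasse_pairing K U ([:0,1:] ^ a)" and p: "degree p < n"
  shows "d dvd hasse_pairing K U p"
proof -
  have p_sum: "p = (\<Sum>a<n. Polynomial.smult (coeff p a) ([:0,1:] ^ a))"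
    by (rule poly_eqI) (use p in \<open>auto simp: coeff_sum coeff_eq_0 simp flip: monom_altdef\<close>)
  have "hasse_pairing K U p = hasse_pairing K U (\<Sum>a<n. Polynomial.smult (coeff p a) ([:0,1:] ^ a))"
    using p_sum by (rule arg_cong)
  also have "\<dots> = (\<Sum>a<n. Polynomial.smult (coeff p a) (hasse_pairing K U ([:0,1:] ^ a)))"
    by (simp add: hasse_pairing_sum hasse_pairing_smult)
  finally have "hasse_pairing K U p = \<dots>" .
  then show ?thesis
    using dvd by (auto intro!: dvd_sum dvd_smult)
qed

lemma hasse_pairing_dvd_imp_eq_0:
  assumes "\<forall>k<K. degree (U k) < m"
    and "\<forall>p. degree p < K \<longrightarrow> [:-z,1:] ^ m dvd hasse_pairing K U p"
  shows "\<forall>k<K. U k = 0"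
  using assms
proof (induction K arbitrary: U)
  case 0
  then show ?case by simp
next
  case (Suc K)
  have shifted: "\<forall>p. degree p < K \<longrightarrow> [:-z,1:] ^ m dvd hasse_pairing K (\<lambda>k. U (Suc k)) p"
  proof (intro allI impI)
    fix p :: "'a poly"
    assume p: "degree p < K"
    have "degree ([:-z,1:] * p) < Suc K"
      using degree_mult_le[of "[:-z,1:]" p] p by simp
    then have "[:-z,1:] ^ m dvd hasse_pairing (Suc K) U ([:-z,1:] * p)"
      using Suc.prems(2) by blast
    moreover have "[:-z,1:] ^ m dvd [:-z,1:] * hasse_pairing (Suc K) U p"
      using Suc.prems(2) p by (simp del: mult_pCons_left)
    moreover have "hasse_pairing K (\<lambda>k. U (Suc k)) p =
        hasse_pairing (Suc K) U ([:-z,1:] * p) - [:-z,1:] * hasse_pairing (Suc K) U p"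
      by (simp add: hasse_pairing_linear_mult del: mult_pCons_left)
    ultimately show "[:-z,1:] ^ m dvd hasse_pairing K (\<lambda>k. U (Suc k)) p"
      by (simp only: dvd_diff)
  qed
  have "\<forall>k<K. degree (U (Suc k)) < m"
    using Suc.prems(1) by simp
  then have tail: "\<forall>k<K. U (Suc k) = 0"
    using shifted by (rule Suc.IH)
  have "[:-z,1:] ^ m dvd hasse_pairing (Suc K) U 1"
    using Suc.prems(2) by simp
  also have "hasse_pairing (Suc K) U 1 = U 0"
    using tail unfolding hasse_pairing_def sum.lessThan_Suc_shift by simp
  finally have "[:-z,1:] ^ m dvd U 0" .
  then have "U 0 = 0"
    using Suc.prems(1) dvd_imp_degree_le[of "[:-z,1:] ^ m" "U 0"] by (force simp: degree_linear_power)
  then show ?case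
    using tail by (auto simp: less_Suc_eq_0_disj)
qed

section \<open>Quotients by powers of a linear polynomial\<close>

lemma coeff_linear_mult:
  fixes p :: "'a::comm_ring_1 poly"
  shows "coeff ([:-z,1:] * p) b = (if b = 0 then 0 else coeff p (b - 1)) - z * coeff p b"
  by (cases b) (simp_all add: algebra_simps)

lemma div_linear_eqI:
  fixes p q :: "'a::field poly"
  assumes "p = [:-z,1:] * q + [:c:]"
  shows "p div [:-z,1:] = q"
proof -
  have "[:c:] div [:-z,1:] = 0"
    by (rule div_poly_less) simp
  then show ?thesis
    unfolding assms poly_div_add_left by (simp del: mult_pCons_left)
qed

lemma div_linear_power_eq:
  fixes p :: "'a::field poly"
  shows "\<exists>e. p div [:-z,1:] ^ j = [:-z,1:] * (p div [:-z,1:] ^ Suc j) + [:e:]"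
proof -
  let ?P = "p div [:-z,1:] ^ j"
  have quot: "?P div [:-z,1:] = p div [:-z,1:] ^ Suc j"
    by (simp only: power_Suc2 poly_div_mult_right)
  have "degree (?P mod [:-z,1:]) = 0"
    using degree_mod_less'[of "[:-z,1:]" ?P] by (cases "?P mod [:-z,1:] = 0") auto
  then have "?P mod [:-z,1:] = [:coeff (?P mod [:-z,1:]) 0:]"
    by (simp add: degree_0_id)
  then have "?P = [:-z,1:] * (?P div [:-z,1:]) + [:coeff (?P mod [:-z,1:]) 0:]"
    by (metis div_mult_mod_eq mult.commute)
  then show ?thesis
    unfolding quot by blast
qed

text \<open>The entries of \<open>G^(j)(z) / j!\<close> (see \<open>Gpoly_deriv_index\<close>).\<close>

definition quotient_coeff :: "'a::comm_ring_1 \<Rightarrow> nat \<Rightarrow> nat \<Rightarrow> nat \<Rightarrow> 'a" where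
  "quotient_coeff z j c a = (if a < c then of_nat ((c - a - 1) choose j) * z ^ (c - a - 1 - j) else 0)"

lemma quotient_coeff_Suc_rec:
  "quotient_coeff z (Suc i) c b - z * quotient_coeff z (Suc i) c (Suc b) = quotient_coeff z i c (Suc b)"
proof (cases "Suc b < c")
  case False
  then show ?thesis by (auto simp: quotient_coeff_def)
next
  case True
  then obtain m where c: "c = Suc (Suc b) + m"
    by (metis less_iff_Suc_add add_Suc_shift add_Suc)
  have e: "c - b - 1 = Suc m" "c - Suc b - 1 = m" using c by auto
  show ?thesis
  proof (cases "Suc i \<le> m")
    case True
    then obtain t where m: "m = Suc i + t" using le_Suc_ex by blast
    show ?thesis using c unfolding quotient_coeff_def e m
      by (simp add: algebra_simps del: binomial_Suc_Suc) (simp add: binomial_Suc_Suc algebra_simps)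
  next
    case False
    then have "m choose Suc i = 0" "m - i = 0" by (simp_all add: binomial_eq_0)
    then show ?thesis using c unfolding quotient_coeff_def e by (simp add: binomial_Suc_Suc binomial_eq_0)
  qed
qed

lemma quotient_coeff_0_rec:
  "quotient_coeff z 0 c b - z * quotient_coeff z 0 c (Suc b) = (if c = Suc b then 1 else 0)"
proof (cases "Suc b < c")
  case True
  then obtain m where "c = Suc (Suc b) + m"
    by (metis less_iff_Suc_add add_Suc_shift add_Suc)
  then show ?thesis by (simp add: quotient_coeff_def)
next
  case False
  then show ?thesis by (auto simp: quotient_coeff_def)
qed

lemma coeff_monomial_div_linear_power:
  fixes z :: "'a::field"
  shows "coeff ([:0,1:] ^ c div [:-z,1:] ^ Suc j) a = quotient_coeff z j c a"
proof -
  define Q where "Q j = (\<Sum>a<c. monom (quotient_coeff z j c a) a)" for j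
  have coeff_Q: "coeff (Q j) a = quotient_coeff z j c a" for j a
    unfolding Q_def coeff_sum coeff_monom by (auto simp: sum.delta quotient_coeff_def)
  have Q_rec: "Q j = [:-z,1:] * Q (Suc j) + [:coeff (Q j) 0 + z * coeff (Q (Suc j)) 0:]" for j
  proof (rule poly_eqI)
    fix n show "coeff (Q j) n = coeff ([:-z,1:] * Q (Suc j) + [:coeff (Q j) 0 + z * coeff (Q (Suc j)) 0:]) n"
      by (cases n) (simp_all add: coeff_linear_mult coeff_Q quotient_coeff_Suc_rec del: mult_pCons_left)
  qed
  have monomial: "[:0,1:] ^ c = [:-z,1:] * Q 0 + [:coeff ([:0,1:] ^ c) 0 + z * coeff (Q 0) 0:]"
  proof (rule poly_eqI)
    fix n
    have "coeff ([:0,1:] ^ c) n = (if c = n then 1 else (0 :: 'a))"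
      by (metis coeff_monom monom_altdef smult_1_left)
    then show "coeff ([:0,1:] ^ c) n = coeff ([:-z,1:] * Q 0 + [:coeff ([:0,1:] ^ c) 0 + z * coeff (Q 0) 0:]) n"
      by (cases n) (simp_all add: coeff_linear_mult coeff_Q quotient_coeff_0_rec del: mult_pCons_left)
  qed
  have "[:0,1:] ^ c div [:-z,1:] ^ Suc j = Q j"
  proof (induction j)
    case 0
    show ?case using div_linear_eqI[OF monomial] by simp
  next
    case (Suc j)
    have "[:0,1:] ^ c div [:-z,1:] ^ Suc (Suc j) = Q j div [:-z,1:]"
      by (simp only: power_Suc2[of _ "Suc j"] poly_div_mult_right Suc.IH)
    also have "\<dots> = Q (Suc j)"
      by (rule div_linear_eqI[OF Q_rec])
    finally show ?case .
  qed
  then show ?thesis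
    by (simp add: coeff_Q)
qed

lemma poly_div_sum_left: "sum f A div (d :: 'a::field poly) = (\<Sum>a\<in>A. f a div d)"
  by (induction A rule: infinite_finite_induct) (simp_all add: poly_div_add_left)

section \<open>Vectors as polynomials\<close>

definition poly_of_vec :: "'a::comm_monoid_add vec \<Rightarrow> 'a poly" where
  "poly_of_vec v = (\<Sum>b<dim_vec v. monom (v $ b) b)"

definition vec_slice :: "'a vec \<Rightarrow> nat \<Rightarrow> nat \<Rightarrow> 'a vec" where
  "vec_slice v i n = vec n (\<lambda>b. v $ (i + b))"

abbreviation block_poly :: "nat \<Rightarrow> 'a::comm_monoid_add vec \<Rightarrow> nat \<Rightarrow> 'a poly" where
  "block_poly s v k \<equiv> poly_of_vec (vec_slice v (k * s) s)"

lemma coeff_poly_of_vec: "coeff (poly_of_vec v) b = (if b < dim_vec v then v $ b else 0)"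
  unfolding poly_of_vec_def coeff_sum coeff_monom by (auto simp: sum.delta)

lemma dim_vec_slice [simp]: "dim_vec (vec_slice v i n) = n"
  by (simp add: vec_slice_def)

lemma index_vec_slice [simp]: "b < n \<Longrightarrow> vec_slice v i n $ b = v $ (i + b)"
  by (simp add: vec_slice_def)

lemma vec_slice_carrier [simp]: "vec_slice v i n \<in> carrier_vec n"
  by (simp add: vec_slice_def)

lemma degree_poly_of_vec_less: "0 < dim_vec v \<Longrightarrow> degree (poly_of_vec v) < dim_vec v"
  by (metis coeff_poly_of_vec degree_le gr0_implies_Suc le_imp_less_Suc less_eq_Suc_le not_less)

lemma poly_of_vec_zero [simp]: "poly_of_vec (0\<^sub>v n) = 0"
  by (simp add: poly_eq_iff coeff_poly_of_vec)

lemma poly_of_vec_empty: "dim_vec v = 0 \<Longrightarrow> poly_of_vec v = 0"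
  by (simp add: poly_of_vec_def)

lemma poly_of_vec_add: "dim_vec v = dim_vec w \<Longrightarrow> poly_of_vec (v + w) = poly_of_vec v + poly_of_vec w"
  by (simp add: poly_eq_iff coeff_poly_of_vec)

lemma poly_of_vec_diff:
  "dim_vec v = dim_vec w \<Longrightarrow> poly_of_vec (v - w) = poly_of_vec v - poly_of_vec (w :: 'a::ab_group_add vec)"
  by (simp add: poly_eq_iff coeff_poly_of_vec)

lemma vec_slice_add: "i + n \<le> dim_vec w \<Longrightarrow> dim_vec v = dim_vec w \<Longrightarrow>
    vec_slice (v + w) i n = vec_slice v i n + vec_slice w i n"
  by (rule eq_vecI) auto

lemma vec_slice_diff: "i + n \<le> dim_vec w \<Longrightarrow> dim_vec v = dim_vec w \<Longrightarrow>
    vec_slice (v - w) i n = vec_slice v i n - vec_slice w i n"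
  by (rule eq_vecI) auto

lemma vec_slice_zero [simp]: "i + n \<le> m \<Longrightarrow> vec_slice (0\<^sub>v m) i n = 0\<^sub>v n"
  by (rule eq_vecI) auto

lemma vec_slice_vec_first: "i + n \<le> m \<Longrightarrow> vec_slice (vec_first v m) i n = vec_slice v i n"
  by (rule eq_vecI) (auto simp: vec_first_def)

lemma vec_slice_vec_last:
  "v \<in> carrier_vec (l + m) \<Longrightarrow> i + n \<le> m \<Longrightarrow> vec_slice (vec_last v m) i n = vec_slice v (l + i) n"
  by (rule eq_vecI) (auto simp: vec_last_def add.assoc)

lemma vec_slice_append_left: "i + n \<le> dim_vec v \<Longrightarrow> vec_slice (v @\<^sub>v w) i n = vec_slice v i n"
  by (rule eq_vecI) auto

lemma vec_first_append: "v \<in> carrier_vec n \<Longrightarrow> vec_first (v @\<^sub>v w) n = v"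
  by (rule eq_vecI) (auto simp: vec_first_def)

lemma vec_last_append: "w \<in> carrier_vec m \<Longrightarrow> vec_last (v @\<^sub>v w) m = w"
  by (rule eq_vecI) (auto simp: vec_last_def)

lemma vec_last_carrier_eq: "v \<in> carrier_vec n \<Longrightarrow> vec_last v n = v"
  by (auto simp: vec_last_def intro!: eq_vecI)

lemma vec_first_zero: "n \<le> m \<Longrightarrow> vec_first (0\<^sub>v m) n = 0\<^sub>v n"
  by (intro eq_vecI) (auto simp: vec_first_def)

lemma block_index_less: "k < n \<Longrightarrow> b < s \<Longrightarrow> k * s + b < n * (s :: nat)"
proof -
  assume "k < n" "b < s"
  then have "k * s + b < Suc k * s" by simp
  also have "\<dots> \<le> n * s" using \<open>k < n\<close> by (intro mult_le_mono1) simp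
  finally show ?thesis .
qed

lemma block_end_le: "k < n \<Longrightarrow> k * s + s \<le> n * (s :: nat)"
  by (metis add.commute mult_Suc mult_le_mono1 Suc_leI)

lemma vec_eq_0_if_block_polys_eq_0:
  assumes v: "v \<in> carrier_vec (n * s)" and blocks: "\<And>k. k < n \<Longrightarrow> block_poly s v k = 0"
  shows "v = 0\<^sub>v (n * s)"
proof (rule eq_vecI)
  fix i assume "i < dim_vec (0\<^sub>v (n * s))"
  then have i: "i < n * s" by simp
  then have s: "0 < s" by (cases s) auto
  have "i div s < n" using i by (simp add: less_mult_imp_div_less)
  then have "coeff (block_poly s v (i div s)) (i mod s) = 0" using blocks by simp
  then show "v $ i = 0\<^sub>v (n * s) $ i"
    using i s by (simp add: coeff_poly_of_vec mult.commute)
qed (use v in simp)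

lemma block_poly_add:
  "u \<in> carrier_vec (n * s) \<Longrightarrow> v \<in> carrier_vec (n * s) \<Longrightarrow> k < n \<Longrightarrow>
    block_poly s (u + v) k = block_poly s u k + block_poly s v k"
  using block_end_le[of k n s] by (simp add: vec_slice_add poly_of_vec_add)

lemma block_poly_diff:
  "u \<in> carrier_vec (n * s) \<Longrightarrow> v \<in> carrier_vec (n * s) \<Longrightarrow> k < n \<Longrightarrow>
    block_poly s (u - v) k = block_poly s u k - block_poly s (v :: 'a::ab_group_add vec) k"
  using block_end_le[of k n s] by (simp add: vec_slice_diff poly_of_vec_diff)

section \<open>Block matrices acting on block polynomials\<close>

lemma mult_mat_vec_index: "i < dim_row A \<Longrightarrow> dim_vec v = dim_col A \<Longrightarrow>
    (A *\<^sub>v v) $ i = (\<Sum>j<dim_col A. A $$ (i,j) * v $ j)"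
  by (simp add: scalar_prod_def lessThan_atLeast0)

lemma mult_mat_vec_zero: "A \<in> carrier_mat n m \<Longrightarrow> A *\<^sub>v 0\<^sub>v m = (0\<^sub>v n :: 'a::semiring_0 vec)"
  by (intro eq_vecI) (auto simp: scalar_prod_def)

lemma zero_mat_mult_vec: "v \<in> carrier_vec m \<Longrightarrow> 0\<^sub>m n m *\<^sub>v v = (0\<^sub>v n :: 'a::semiring_0 vec)"
  by (intro eq_vecI) (auto simp: scalar_prod_def)

lemma four_block_mat_zero_mult_vec:
  assumes A: "A \<in> carrier_mat nr1 nc1" and B: "B \<in> carrier_mat nr1 nc2" and D: "D \<in> carrier_mat nr2 nc2"
    and y: "y \<in> carrier_vec (nc1 + nc2)"
  shows "four_block_mat A B (0\<^sub>m nr2 nc1) D *\<^sub>v y =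
    (A *\<^sub>v vec_first y nc1 + B *\<^sub>v vec_last y nc2) @\<^sub>v (D *\<^sub>v vec_last y nc2)"
proof -
  have "four_block_mat A B (0\<^sub>m nr2 nc1) D *\<^sub>v y =
      four_block_mat A B (0\<^sub>m nr2 nc1) D *\<^sub>v (vec_first y nc1 @\<^sub>v vec_last y nc2)"
    using y by simp
  also have "\<dots> = (A *\<^sub>v vec_first y nc1 + B *\<^sub>v vec_last y nc2) @\<^sub>v
      (0\<^sub>m nr2 nc1 *\<^sub>v vec_first y nc1 + D *\<^sub>v vec_last y nc2)"
    by (rule four_block_mat_mult_vec[OF A B _ D]) auto
  also have "0\<^sub>m nr2 nc1 *\<^sub>v vec_first y nc1 + D *\<^sub>v vec_last y nc2 = D *\<^sub>v vec_last y nc2"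
    using D by (intro eq_vecI) auto
  finally show ?thesis .
qed

lemma four_block_mat_empty_rows_mult_vec:
  assumes K: "K \<in> carrier_mat n c" and E: "E \<in> carrier_mat n d" and w: "w \<in> carrier_vec (c + d)"
  shows "four_block_mat K E (0\<^sub>m 0 c) (0\<^sub>m 0 d) *\<^sub>v w = K *\<^sub>v vec_first w c + E *\<^sub>v vec_last w d"
proof -
  have "four_block_mat K E (0\<^sub>m 0 c) (0\<^sub>m 0 d) *\<^sub>v w =
      four_block_mat K E (0\<^sub>m 0 c) (0\<^sub>m 0 d) *\<^sub>v (vec_first w c @\<^sub>v vec_last w d)"
    using w by simp
  also have "\<dots> = (K *\<^sub>v vec_first w c + E *\<^sub>v vec_last w d) @\<^sub>v
      (0\<^sub>m 0 c *\<^sub>v vec_first w c + 0\<^sub>m 0 d *\<^sub>v vec_last w d)"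
    by (rule four_block_mat_mult_vec[OF K E]) auto
  finally show ?thesis by (auto intro!: eq_vecI)
qed

lemma sum_lessThan_mult:
  "(\<Sum>c<n * s. f c) = (\<Sum>k<n. \<Sum>b<s. f (k * s + b) :: 'a::comm_monoid_add)" for n s :: nat
proof (induction n)
  case (Suc n)
  have "(\<Sum>c<Suc n * s. f c) = (\<Sum>c\<in>{0..<n * s}. f c) + (\<Sum>c\<in>{n * s..<n * s + s}. f c)"
    by (simp add: lessThan_atLeast0 sum.atLeastLessThan_concat add.commute)
  also have "(\<Sum>c\<in>{n * s..<n * s + s}. f c) = (\<Sum>b<s. f (n * s + b))"
    using sum.shift_bounds_nat_ivl[of f 0 "n * s" s] by (simp add: lessThan_atLeast0 add.commute)
  finally show ?case using Suc by (simp add: lessThan_atLeast0)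
qed simp

lemma kron_carrier_mat:
  "A \<in> carrier_mat ra ca \<Longrightarrow> B \<in> carrier_mat rb cb \<Longrightarrow> kron A B \<in> carrier_mat (ra * rb) (ca * cb)"
  by (simp add: kron_def)

lemma block_poly_kron_mult_vec:
  fixes A B :: "'a::comm_ring_1 mat"
  assumes A: "A \<in> carrier_mat ra ca" and B: "B \<in> carrier_mat rb cb"
    and v: "v \<in> carrier_vec (ca * cb)" and k: "k < ra"
  shows "block_poly rb (kron A B *\<^sub>v v) k =
    (\<Sum>k'<ca. Polynomial.smult (A $$ (k, k')) (poly_of_vec (B *\<^sub>v vec_slice v (k' * cb) cb)))"
proof (rule poly_eqI)
  fix b
  show "coeff (block_poly rb (kron A B *\<^sub>v v) k) b =
    coeff (\<Sum>k'<ca. Polynomial.smult (A $$ (k, k')) (poly_of_vec (B *\<^sub>v vec_slice v (k' * cb) cb))) b"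
  proof (cases "b < rb")
    case False
    then show ?thesis using B by (simp add: coeff_poly_of_vec coeff_sum)
  next
    case True
    have row: "k * rb + b < ra * rb"
      using k True by (rule block_index_less)
    have "(kron A B *\<^sub>v v) $ (k * rb + b) = (\<Sum>c<ca * cb. kron A B $$ (k * rb + b, c) * v $ c)"
      using kron_carrier_mat[OF A B] v row by (subst mult_mat_vec_index) auto
    also have "\<dots> = (\<Sum>k'<ca. \<Sum>b'<cb. A $$ (k, k') * (B $$ (b, b') * v $ (k' * cb + b')))"
      unfolding sum_lessThan_mult using A B row True
      by (intro sum.cong refl) (auto simp: kron_def block_index_less)
    finally show ?thesis
      using True B
      by (simp add: coeff_poly_of_vec coeff_sum scalar_prod_def sum_distrib_left lessThan_atLeast0)
  qed
qed

lemma block_poly_kron_mult_vec_unit_row: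
  fixes A B :: "'a::comm_ring_1 mat"
  assumes A: "A \<in> carrier_mat ra ca" and B: "B \<in> carrier_mat rb cb"
    and v: "v \<in> carrier_vec (ca * cb)" and k: "k < ra"
    and row: "\<And>k'. k' < ca \<Longrightarrow> A $$ (k, k') = (if k' = t then 1 else 0)"
  shows "block_poly rb (kron A B *\<^sub>v v) k =
    (if t < ca then poly_of_vec (B *\<^sub>v vec_slice v (t * cb) cb) else 0)"
proof -
  have "block_poly rb (kron A B *\<^sub>v v) k =
      (\<Sum>k'<ca. if k' = t then poly_of_vec (B *\<^sub>v vec_slice v (k' * cb) cb) else 0)"
    unfolding block_poly_kron_mult_vec[OF A B v k] using row by (intro sum.cong) auto
  then show ?thesis by (simp add: sum.delta')
qed

lemma block_poly_kron_mult_vec_zero_row: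
  fixes A B :: "'a::comm_ring_1 mat"
  assumes A: "A \<in> carrier_mat ra ca" and B: "B \<in> carrier_mat rb cb"
    and v: "v \<in> carrier_vec (ca * cb)" and k: "k < ra"
    and row: "\<And>k'. k' < ca \<Longrightarrow> A $$ (k, k') = 0"
  shows "block_poly rb (kron A B *\<^sub>v v) k = 0"
  unfolding block_poly_kron_mult_vec[OF A B v k] using row by (intro sum.neutral) auto

lemma poly_of_vec_mult_quotient_mat:
  fixes M :: "'a::field_char_0 mat"
  assumes M: "M \<in> carrier_mat (r - j) r" and w: "w \<in> carrier_vec r"
    and entries: "\<And>a c. a < r - j \<Longrightarrow> c < r \<Longrightarrow> M $$ (a, c) = quotient_coeff z j c a"
  shows "poly_of_vec (M *\<^sub>v w) = poly_of_vec w div [:-z,1:] ^ Suc j"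
proof (rule poly_eqI)
  fix a
  have "poly_of_vec w div [:-z,1:] ^ Suc j =
      (\<Sum>c<r. Polynomial.smult (w $ c) ([:0,1:] ^ c div [:-z,1:] ^ Suc j))"
    using w by (simp add: poly_of_vec_def monom_altdef poly_div_sum_left div_smult_left)
  then have rhs: "coeff (poly_of_vec w div [:-z,1:] ^ Suc j) a = (\<Sum>c<r. w $ c * quotient_coeff z j c a)"
    by (simp only: coeff_sum coeff_smult coeff_monomial_div_linear_power)
  show "coeff (poly_of_vec (M *\<^sub>v w)) a = coeff (poly_of_vec w div [:-z,1:] ^ Suc j) a"
  proof (cases "a < r - j")
    case True
    then show ?thesis
      unfolding rhs using M w
      by (auto simp: coeff_poly_of_vec scalar_prod_def lessThan_atLeast0 entries mult.commute
          intro!: sum.cong)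
  next
    case False
    have "quotient_coeff z j c a = 0" if "c < r" for c
      using False that by (auto simp: quotient_coeff_def intro!: binomial_eq_0)
    then show ?thesis
      unfolding rhs using M w False by (simp add: coeff_poly_of_vec)
  qed
qed

definition embed_mat :: "nat \<Rightarrow> nat \<Rightarrow> 'a::{zero,one} mat" where
  "embed_mat n m = mat n m (\<lambda>(i, j). if i = j then 1 else 0)"

lemma poly_of_vec_embed_mat:
  fixes w :: "'a::comm_ring_1 vec"
  assumes "m \<le> n" and "w \<in> carrier_vec m"
  shows "poly_of_vec (embed_mat n m *\<^sub>v w) = poly_of_vec w"
proof (rule poly_eqI)
  fix b
  have "(\<Sum>c<m. (if b = c then 1 else 0) * w $ c) = (\<Sum>c<m. if c = b then w $ c else 0)"
    by (intro sum.cong) auto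
  also have "\<dots> = (if b < m then w $ b else 0)"
    by simp
  finally show "coeff (poly_of_vec (embed_mat n m *\<^sub>v w)) b = coeff (poly_of_vec w) b"
    using assms by (auto simp: coeff_poly_of_vec embed_mat_def scalar_prod_def lessThan_atLeast0)
qed

lemma block_poly_kron_embed_mat:
  fixes u :: "'a::comm_ring_1 vec"
  assumes u: "u \<in> carrier_vec (q * m)" and m: "m \<le> r" and k: "k < nu"
  shows "block_poly r (kron (embed_mat nu q) (embed_mat r m) *\<^sub>v u) k = (if k < q then block_poly m u k else 0)"
proof -
  have A: "embed_mat nu q \<in> carrier_mat nu q" and B: "embed_mat r m \<in> carrier_mat r m"
    by (simp_all add: embed_mat_def)
  show ?thesis
  proof (cases "k < q")
    case True
    have row: "embed_mat nu q $$ (k, k') = (if k' = k then 1 else 0)" if "k' < q" for k'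
      using that k by (auto simp: embed_mat_def)
    show ?thesis
      using block_poly_kron_mult_vec_unit_row[OF A B u k row] poly_of_vec_embed_mat[OF m vec_slice_carrier] True
      by simp
  next
    case False
    then show ?thesis
      using block_poly_kron_mult_vec_zero_row[OF A B u k] k by (simp add: embed_mat_def)
  qed
qed

section \<open>The building blocks of the factors\<close>

lemma shift_mat_carrier: "shift_mat n \<in> carrier_mat n n"
  by (simp add: shift_mat_def)

lemma ellphi_carrier: "ellphi q nu' \<in> carrier_mat q (nu' - q)"
  unfolding ellphi_def by (rule mult_carrier_mat) (auto simp: mat_of_cols_def mat_of_rows_def)

lemma ellphi_index:
  "i < q \<Longrightarrow> j < nu' - q \<Longrightarrow> ellphi q nu' $$ (i, j) = (if Suc i = q \<and> j = 0 then 1 else 0)"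
  unfolding ellphi_def
  by (simp add: scalar_prod_def mat_of_cols_index mat_of_rows_index unit_vec_def)
    (auto simp: mat_of_cols_def mat_of_rows_def)

lemma block_poly_kron_one:
  fixes B :: "'a::comm_ring_1 mat"
  assumes "B \<in> carrier_mat rb cb" and "v \<in> carrier_vec (n * cb)" and "k < n"
  shows "block_poly rb (kron (1\<^sub>m n) B *\<^sub>v v) k = poly_of_vec (B *\<^sub>v vec_slice v (k * cb) cb)"
  using block_poly_kron_mult_vec_unit_row[OF one_carrier_mat assms, of k] assms(3) by simp

lemma block_poly_kron_shift:
  fixes B :: "complex mat"
  assumes "B \<in> carrier_mat rb cb" and "v \<in> carrier_vec (n * cb)" and "k < n"
  shows "block_poly rb (kron (shift_mat n) B *\<^sub>v v) k =
    (if Suc k < n then poly_of_vec (B *\<^sub>v vec_slice v (Suc k * cb) cb) else 0)"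
  using block_poly_kron_mult_vec_unit_row[OF shift_mat_carrier assms, of "Suc k"] assms(3)
  by (simp add: shift_mat_def)

lemma block_poly_kron_ellphi:
  fixes B :: "complex mat"
  assumes "B \<in> carrier_mat rb cb" and "v \<in> carrier_vec ((nu' - q) * cb)" and "k < q" and "q < nu'"
  shows "block_poly rb (kron (ellphi q nu') B *\<^sub>v v) k =
    (if Suc k = q then poly_of_vec (B *\<^sub>v vec_slice v 0 cb) else 0)"
proof (cases "Suc k = q")
  case True
  then show ?thesis
    using block_poly_kron_mult_vec_unit_row[OF ellphi_carrier assms(1-3), of 0] assms(3,4)
    by (simp add: ellphi_index)
next
  case False
  then show ?thesis
    using block_poly_kron_mult_vec_zero_row[OF ellphi_carrier assms(1-3)] assms(3)
    by (simp add: ellphi_index)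
qed

lemma Fpoly_deriv_carrier: "mderiv i (Fpoly r j) z \<in> carrier_mat (r - j) (r - Suc j)"
  by (simp add: mderiv_def Fpoly_def)

lemma poly_of_vec_mult_Fpoly:
  assumes j: "j < r" and w: "w \<in> carrier_vec (r - Suc j)"
  shows "poly_of_vec (mderiv 0 (Fpoly r j) z *\<^sub>v w) = [:-z,1:] * poly_of_vec w"
proof (rule poly_eqI)
  fix b
  show "coeff (poly_of_vec (mderiv 0 (Fpoly r j) z *\<^sub>v w)) b = coeff ([:-z,1:] * poly_of_vec w) b"
  proof (cases "b < r - j")
    case False
    then show ?thesis
      unfolding coeff_linear_mult using w j by (auto simp: coeff_poly_of_vec mderiv_def Fpoly_def)
  next
    case True
    have "coeff (poly_of_vec (mderiv 0 (Fpoly r j) z *\<^sub>v w)) b =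
        (\<Sum>c<r - Suc j. (if b = c then - z else if b = c + 1 then 1 else 0) * w $ c)"
      using True w
      by (auto simp: coeff_poly_of_vec mderiv_def Fpoly_def scalar_prod_def lessThan_atLeast0
          intro!: sum.cong)
    also have "\<dots> = (\<Sum>c<r - Suc j. (if c = b then - z * w $ c else 0)
        + (if c = b - 1 \<and> b \<noteq> 0 then w $ c else 0))"
      by (intro sum.cong) auto
    also have "\<dots> = (if b < r - Suc j then - z * w $ b else 0) + (if b \<noteq> 0 then w $ (b - 1) else 0)"
      using True by (simp add: sum.distrib sum.delta; arith)
    also have "\<dots> = coeff ([:-z,1:] * poly_of_vec w) b"
      unfolding coeff_linear_mult using True w by (auto simp: coeff_poly_of_vec)
    finally show ?thesis .
  qed
qed

lemma poly_of_vec_mult_Fpoly_deriv: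
  assumes j: "j < r" and w: "w \<in> carrier_vec (r - Suc j)"
  shows "poly_of_vec (mderiv 1 (Fpoly r j) z *\<^sub>v w) = - poly_of_vec w"
proof (rule poly_eqI)
  fix b
  show "coeff (poly_of_vec (mderiv 1 (Fpoly r j) z *\<^sub>v w)) b = coeff (- poly_of_vec w) b"
  proof (cases "b < r - j")
    case False
    then show ?thesis using w j by (auto simp: coeff_poly_of_vec mderiv_def Fpoly_def)
  next
    case True
    have entry: "mderiv 1 (Fpoly r j) z $$ (b, c) = (if c = b then - 1 else 0)" if "c < r - Suc j" for c
      using True that by (auto simp: mderiv_def Fpoly_def pderiv_pCons)
    have "coeff (poly_of_vec (mderiv 1 (Fpoly r j) z *\<^sub>v w)) b =
        (\<Sum>c<r - Suc j. mderiv 1 (Fpoly r j) z $$ (b, c) * w $ c)"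
      using True w Fpoly_deriv_carrier[of 1 r j z]
      by (simp add: coeff_poly_of_vec scalar_prod_def lessThan_atLeast0)
    also have "\<dots> = (\<Sum>c<r - Suc j. (if c = b then - w $ c else 0))"
      using entry by (intro sum.cong) auto
    also have "\<dots> = coeff (- poly_of_vec w) b"
      using True w by (simp add: sum.delta coeff_poly_of_vec)
    finally show ?thesis .
  qed
qed

lemma Gpoly_carrier: "mderiv j (Gpoly r) z \<in> carrier_mat r r"
  by (simp add: mderiv_def Gpoly_def)

lemma Gpoly_deriv_index:
  "a < r \<Longrightarrow> c < r \<Longrightarrow> mderiv j (Gpoly r) z $$ (a, c) / fact j = quotient_coeff z j c a"
  using poly_hasse_deriv_monomial[of j _ z]
  by (auto simp: mderiv_def Gpoly_def hasse_deriv_def quotient_coeff_def)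

lemma Gj0_carrier: "(1 / fact j) \<cdot>\<^sub>m Gj0_deriv r j z \<in> carrier_mat (r - j) r"
  by (simp add: Gj0_deriv_def)

lemma poly_of_vec_mult_Gj0_deriv:
  assumes "w \<in> carrier_vec r"
  shows "poly_of_vec (((1 / fact j) \<cdot>\<^sub>m Gj0_deriv r j z) *\<^sub>v w) = poly_of_vec w div [:-z,1:] ^ Suc j"
proof (rule poly_of_vec_mult_quotient_mat[OF _ assms])
  show "(1 / fact j) \<cdot>\<^sub>m Gj0_deriv r j z \<in> carrier_mat (r - j) r"
    by (simp add: Gj0_deriv_def)
  fix a c assume "a < r - j" "c < r"
  then show "((1 / fact j) \<cdot>\<^sub>m Gj0_deriv r j z) $$ (a, c) = quotient_coeff z j c a"
    using Gpoly_deriv_index[of a r c j z] by (simp add: Gj0_deriv_def)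
qed

lemma poly_of_vec_mult_Gpoly:
  assumes "w \<in> carrier_vec r"
  shows "poly_of_vec (mderiv 0 (Gpoly r) z *\<^sub>v w) = poly_of_vec w div [:-z,1:]"
  using poly_of_vec_mult_quotient_mat[OF _ assms, of "mderiv 0 (Gpoly r) z" 0 z]
    Gpoly_deriv_index[of _ r _ 0 z]
  by (simp add: mderiv_def Gpoly_def)

lemma Dblock_carrier: "Dblock q r nu' z \<in> carrier_mat ((nu' - q) * r) ((nu' - q) * r)"
  unfolding Dblock_def by (rule minus_carrier_mat[OF kron_carrier_mat[OF shift_mat_carrier Gpoly_carrier]])

lemma block_poly_Dblock:
  assumes w: "w \<in> carrier_vec ((nu' - q) * r)" and l: "l < nu' - q"
  shows "block_poly r (Dblock q r nu' z *\<^sub>v w) l =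
    block_poly r w l - (if Suc l < nu' - q then block_poly r w (Suc l) div [:-z,1:] else 0)"
proof -
  let ?n = "nu' - q" and ?G = "mderiv 0 (Gpoly r) z"
  have I: "kron (1\<^sub>m ?n) (1\<^sub>m r) \<in> carrier_mat (?n * r) (?n * r)"
    by (rule kron_carrier_mat) auto
  have S: "kron (shift_mat ?n) ?G \<in> carrier_mat (?n * r) (?n * r)"
    by (rule kron_carrier_mat[OF shift_mat_carrier Gpoly_carrier])
  have "Dblock q r nu' z *\<^sub>v w = kron (1\<^sub>m ?n) (1\<^sub>m r) *\<^sub>v w - kron (shift_mat ?n) ?G *\<^sub>v w"
    unfolding Dblock_def using I S w by (rule minus_mult_distrib_mat_vec)
  then have "block_poly r (Dblock q r nu' z *\<^sub>v w) l =
      block_poly r (kron (1\<^sub>m ?n) (1\<^sub>m r) *\<^sub>v w) l - block_poly r (kron (shift_mat ?n) ?G *\<^sub>v w) l"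
    using block_poly_diff[OF mult_mat_vec_carrier[OF I w] mult_mat_vec_carrier[OF S w] l] by simp
  also have "block_poly r (kron (1\<^sub>m ?n) (1\<^sub>m r) *\<^sub>v w) l = block_poly r w l"
    using block_poly_kron_one[OF one_carrier_mat w l] by simp
  also have "block_poly r (kron (shift_mat ?n) ?G *\<^sub>v w) l =
      (if Suc l < ?n then block_poly r w (Suc l) div [:-z,1:] else 0)"
    using block_poly_kron_shift[OF Gpoly_carrier w l] by (simp add: poly_of_vec_mult_Gpoly)
  finally show ?thesis .
qed

lemma Dblock_mult_vec_eq_0_imp:
  assumes w: "w \<in> carrier_vec ((nu' - q) * r)" and D0: "Dblock q r nu' z *\<^sub>v w = 0\<^sub>v ((nu' - q) * r)"
  shows "w = 0\<^sub>v ((nu' - q) * r)"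
proof (rule vec_eq_0_if_block_polys_eq_0[OF w])
  let ?n = "nu' - q"
  have rec: "block_poly r w l = (if Suc l < ?n then block_poly r w (Suc l) div [:-z,1:] else 0)"
    if "l < ?n" for l
    using block_poly_Dblock[OF w that, of z] D0 block_end_le[OF that, of r] by simp
  show "block_poly r w l = 0" if "l < ?n" for l
    using that
  proof (induction "?n - l" arbitrary: l)
    case 0
    then show ?case by simp
  next
    case (Suc d)
    then show ?case
      using rec[of l] Suc.hyps(1)[of "Suc l"] by (cases "Suc l < ?n") auto
  qed
qed

section \<open>The factors and their products\<close>

lemma kron_Fpoly_carrier:
  "kron (1\<^sub>m q) (mderiv 0 (Fpoly r j) z) + kron (shift_mat q) (mderiv 1 (Fpoly r j) z)
    \<in> carrier_mat (q * (r - j)) (q * (r - Suc j))"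
  by (intro add_carrier_mat kron_carrier_mat one_carrier_mat shift_mat_carrier Fpoly_deriv_carrier)

lemma kron_ellphi_Gj0_carrier:
  "kron (ellphi q nu') ((1 / fact j) \<cdot>\<^sub>m Gj0_deriv r j z) \<in> carrier_mat (q * (r - j)) ((nu' - q) * r)"
  by (intro kron_carrier_mat ellphi_carrier Gj0_carrier)

lemma Kbar_carrier:
  "Kbar q r nu' z j \<in> carrier_mat (q * (r - j) + (nu' - q) * r) (q * (r - Suc j) + (nu' - q) * r)"
proof -
  consider "j + 2 \<le> r" | "j + 1 = r" | "r \<le> j" by linarith
  then show ?thesis
  proof cases
    case 1
    then show ?thesis unfolding Kbar_def
      using four_block_carrier_mat[OF kron_Fpoly_carrier Dblock_carrier] by simp
  next
    case 2
    then show ?thesis unfolding Kbar_def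
      using Dblock_carrier[of q r nu' z] by (auto simp: four_block_carrier_mat)
  next
    case 3
    then show ?thesis unfolding Kbar_def using Dblock_carrier by auto
  qed
qed

lemma vec_last_Kbar_mult_vec:
  assumes y: "y \<in> carrier_vec (q * (r - Suc j) + (nu' - q) * r)"
  shows "vec_last (Kbar q r nu' z j *\<^sub>v y) ((nu' - q) * r) = Dblock q r nu' z *\<^sub>v vec_last y ((nu' - q) * r)"
proof -
  have D: "Dblock q r nu' z *\<^sub>v vec_last y ((nu' - q) * r) \<in> carrier_vec ((nu' - q) * r)"
    by (rule mult_mat_vec_carrier[OF Dblock_carrier]) simp
  consider "j + 2 \<le> r" | "j + 1 = r" | "r \<le> j" by linarith
  then show ?thesis
  proof cases
    case 1
    then show ?thesis unfolding Kbar_def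
      using four_block_mat_zero_mult_vec[OF kron_Fpoly_carrier uminus_carrier_mat[OF kron_ellphi_Gj0_carrier]
          Dblock_carrier y] vec_last_append[OF D] by simp
  next
    case 2
    then have "y \<in> carrier_vec (0 + (nu' - q) * r)" using y by simp
    with 2 show ?thesis unfolding Kbar_def
      using four_block_mat_zero_mult_vec[OF zero_carrier_mat zero_carrier_mat Dblock_carrier]
        vec_last_append[OF D] by simp
  next
    case 3
    then have "y \<in> carrier_vec ((nu' - q) * r)" using y by simp
    with 3 D show ?thesis unfolding Kbar_def by (simp add: vec_last_carrier_eq)
  qed
qed

lemma vec_first_Kbar_mult_vec:
  assumes y: "y \<in> carrier_vec (q * (r - Suc j) + (r - 1) * r)" and j: "j + 2 \<le> r"
  shows "vec_first (Kbar q r (q + r - 1) z j *\<^sub>v y) (q * (r - j)) =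
    kron (1\<^sub>m q) (mderiv 0 (Fpoly r j) z) *\<^sub>v vec_first y (q * (r - Suc j))
    + kron (shift_mat q) (mderiv 1 (Fpoly r j) z) *\<^sub>v vec_first y (q * (r - Suc j))
    - kron (ellphi q (q + r - 1)) ((1 / fact j) \<cdot>\<^sub>m Gj0_deriv r j z) *\<^sub>v vec_last y ((r - 1) * r)"
proof -
  let ?nu = "q + r - 1" and ?s = "r - j" and ?s' = "r - Suc j"
  let ?y1 = "vec_first y (q * ?s')" and ?y2 = "vec_last y ((?nu - q) * r)"
  let ?A = "kron (1\<^sub>m q) (mderiv 0 (Fpoly r j) z)" and ?B = "kron (shift_mat q) (mderiv 1 (Fpoly r j) z)"
  let ?C = "kron (ellphi q ?nu) ((1 / fact j) \<cdot>\<^sub>m Gj0_deriv r j z)"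
  have y': "y \<in> carrier_vec (q * ?s' + (?nu - q) * r)" using y by simp
  have A: "?A \<in> carrier_mat (q * ?s) (q * ?s')" and B: "?B \<in> carrier_mat (q * ?s) (q * ?s')"
    by (intro kron_carrier_mat one_carrier_mat shift_mat_carrier Fpoly_deriv_carrier)+
  have "Kbar q r ?nu z j *\<^sub>v y = ((?A + ?B) *\<^sub>v ?y1 + (- ?C) *\<^sub>v ?y2) @\<^sub>v (Dblock q r ?nu z *\<^sub>v ?y2)"
    unfolding Kbar_def using j four_block_mat_zero_mult_vec[OF kron_Fpoly_carrier
        uminus_carrier_mat[OF kron_ellphi_Gj0_carrier] Dblock_carrier y'] by simp
  also have "(?A + ?B) *\<^sub>v ?y1 + (- ?C) *\<^sub>v ?y2 = ?A *\<^sub>v ?y1 + ?B *\<^sub>v ?y1 - ?C *\<^sub>v ?y2"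
    using A B kron_ellphi_Gj0_carrier[of q ?nu j r z]
    by (simp add: add_mult_distrib_mat_vec minus_add_uminus_vec[of _ "q * ?s"])
  finally show ?thesis
    using A B kron_ellphi_Gj0_carrier[of q ?nu j r z] by (simp add: vec_first_append)
qed

lemma vec_first_Kbar_mult_vec_eq_0:
  assumes y: "y \<in> carrier_vec (q * (r - Suc j) + (r - 1) * r)" and j: "j + 1 = r"
  shows "vec_first (Kbar q r (q + r - 1) z j *\<^sub>v y) q = 0\<^sub>v q"
proof -
  let ?nu = "q + r - 1" and ?y2 = "vec_last y ((q + r - 1 - q) * r)"
  have y0: "y \<in> carrier_vec (0 + (?nu - q) * r)" using y j by simp
  have "Kbar q r ?nu z j *\<^sub>v y = (0\<^sub>m q 0 *\<^sub>v vec_first y 0 + 0\<^sub>m q ((?nu - q) * r) *\<^sub>v ?y2)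
      @\<^sub>v (Dblock q r ?nu z *\<^sub>v ?y2)"
    unfolding Kbar_def
    using j four_block_mat_zero_mult_vec[OF zero_carrier_mat zero_carrier_mat Dblock_carrier y0] by simp
  moreover have "0\<^sub>m q 0 *\<^sub>v vec_first y 0 + 0\<^sub>m q ((?nu - q) * r) *\<^sub>v ?y2 = 0\<^sub>v q"
    by (simp add: zero_mat_mult_vec)
  ultimately show ?thesis
    by (simp add: vec_first_append)
qed

lemma block_poly_vec_first_Kbar_mult_vec:
  assumes y: "y \<in> carrier_vec (q * (r - Suc j) + (r - 1) * r)" and k: "k < q" and j: "j < r"
  shows "block_poly (r - j) (vec_first (Kbar q r (q + r - 1) z j *\<^sub>v y) (q * (r - j))) k =
    [:-z,1:] * block_poly (r - Suc j) (vec_first y (q * (r - Suc j))) k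
    - (if Suc k < q then block_poly (r - Suc j) (vec_first y (q * (r - Suc j))) (Suc k)
       else block_poly r (vec_last y ((r - 1) * r)) 0 div [:-z,1:] ^ Suc j)"
proof -
  let ?nu = "q + r - 1" and ?s = "r - j" and ?s' = "r - Suc j"
  let ?y1 = "vec_first y (q * ?s')" and ?y2 = "vec_last y ((r - 1) * r)"
  have y1: "?y1 \<in> carrier_vec (q * ?s')" and y2: "?y2 \<in> carrier_vec ((?nu - q) * r)"
    by simp_all
  consider "j + 2 \<le> r" | "j + 1 = r" using j by linarith
  then show ?thesis
  proof cases
    case 1
    let ?F0 = "mderiv 0 (Fpoly r j) z" and ?F1 = "mderiv 1 (Fpoly r j) z"
    let ?G = "(1 / fact j) \<cdot>\<^sub>m Gj0_deriv r j z"
    have F0: "?F0 \<in> carrier_mat ?s ?s'" and F1: "?F1 \<in> carrier_mat ?s ?s'" and G: "?G \<in> carrier_mat ?s r"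
      by (simp_all add: Fpoly_deriv_carrier Gj0_carrier)
    have A: "kron (1\<^sub>m q) ?F0 *\<^sub>v ?y1 \<in> carrier_vec (q * ?s)"
      and B: "kron (shift_mat q) ?F1 *\<^sub>v ?y1 \<in> carrier_vec (q * ?s)"
      and C: "kron (ellphi q ?nu) ?G *\<^sub>v ?y2 \<in> carrier_vec (q * ?s)"
      using mult_mat_vec_carrier[OF kron_carrier_mat[OF one_carrier_mat F0] y1]
        mult_mat_vec_carrier[OF kron_carrier_mat[OF shift_mat_carrier F1] y1]
        mult_mat_vec_carrier[OF kron_carrier_mat[OF ellphi_carrier G] y2] by simp_all
    have "block_poly ?s (kron (1\<^sub>m q) ?F0 *\<^sub>v ?y1) k = [:-z,1:] * block_poly ?s' ?y1 k"
      using block_poly_kron_one[OF F0 y1 k] poly_of_vec_mult_Fpoly[OF j] by simp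
    moreover have "block_poly ?s (kron (shift_mat q) ?F1 *\<^sub>v ?y1) k =
        (if Suc k < q then - block_poly ?s' ?y1 (Suc k) else 0)"
      using block_poly_kron_shift[OF F1 y1 k] poly_of_vec_mult_Fpoly_deriv[OF j] by simp
    moreover have "block_poly ?s (kron (ellphi q ?nu) ?G *\<^sub>v ?y2) k =
        (if Suc k = q then block_poly r ?y2 0 div [:-z,1:] ^ Suc j else 0)"
      using block_poly_kron_ellphi[OF G y2 k] 1 poly_of_vec_mult_Gj0_deriv by simp
    ultimately show ?thesis
      unfolding vec_first_Kbar_mult_vec[OF y 1]
      using block_poly_diff[OF add_carrier_vec[OF A B] C k] block_poly_add[OF A B k] k
      by (cases "Suc k < q") (simp_all del: mult_pCons_left power_Suc)
  next
    case 2
    have "degree (block_poly r ?y2 0) < degree ([:-z,1:] ^ Suc j)"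
      using 2 degree_poly_of_vec_less[of "vec_slice ?y2 0 r"] by (simp add: degree_linear_power)
    then have "block_poly r ?y2 0 div [:-z,1:] ^ Suc j = 0"
      by (rule div_poly_less)
    moreover have "r - j = 1" "r - Suc j = 0" using 2 by auto
    ultimately show ?thesis
      using vec_first_Kbar_mult_vec_eq_0[OF y 2] k by (simp add: poly_of_vec_empty)
  qed
qed

text \<open>The polynomials of a vector in the domain of \<open>Kbar_j\<close>: its \<open>q\<close> blocks of length \<open>r - j\<close>,
  then its \<open>r - 1\<close> blocks of length \<open>r\<close> divided by \<open>(t - z)^j\<close>. This normalisation makes \<open>Kbar_j\<close>
  multiply their Hasse pairing by \<open>t - z\<close>.\<close>

definition level_polys :: "complex \<Rightarrow> nat \<Rightarrow> nat \<Rightarrow> nat \<Rightarrow> complex vec \<Rightarrow> nat \<Rightarrow> complex poly" where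
  "level_polys z q r j y k =
    (if k < q then block_poly (r - j) (vec_first y (q * (r - j))) k
     else if k < q + r - 1 then block_poly r (vec_last y ((r - 1) * r)) (k - q) div [:-z,1:] ^ j
     else 0)"

lemma level_polys_eq_0:
  assumes "r \<le> j" shows "level_polys z q r j y k = 0"
proof -
  let ?V = "block_poly r (vec_last y ((r - 1) * r)) (k - q)"
  have "?V div [:-z,1:] ^ j = 0" if "q \<le> k" "k < q + r - 1"
  proof (rule div_poly_less)
    have "0 < r" using that by linarith
    then show "degree ?V < degree ([:-z,1:] ^ j)"
      unfolding degree_linear_power
      using assms degree_poly_of_vec_less[of "vec_slice (vec_last y ((r - 1) * r)) ((k - q) * r) r"]
      by simp
  qed
  then show ?thesis
    using assms by (simp add: level_polys_def poly_of_vec_empty)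
qed

lemma level_polys_0:
  assumes x: "x \<in> carrier_vec (q * r + (r - 1) * r)" and k: "k < q + r - 1"
  shows "level_polys z q r 0 x k = block_poly r x k"
proof (cases "k < q")
  case True
  then show ?thesis
    using block_end_le[OF True, of r] by (simp add: level_polys_def vec_slice_vec_first)
next
  case False
  then have "(k - q) * r + r \<le> (r - 1) * r" and "q * r + (k - q) * r = k * r"
    using k block_end_le[of "k - q" "r - 1" r] by (auto simp: add_mult_distrib[symmetric])
  then show ?thesis
    using False k x by (simp add: level_polys_def vec_slice_vec_last)
qed

lemma level_polys_Kbar_mult_vec_head:
  assumes y: "y \<in> carrier_vec (q * (r - Suc j) + (r - 1) * r)" and j: "j < r" and k: "k < q"
  shows "level_polys z q r j (Kbar q r (q + r - 1) z j *\<^sub>v y) k =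
    [:-z,1:] * level_polys z q r (Suc j) y k - level_polys z q r (Suc j) y (Suc k)"
proof -
  let ?T = "block_poly (r - Suc j) (vec_first y (q * (r - Suc j)))"
  let ?V0 = "block_poly r (vec_last y ((r - 1) * r)) 0"
  have "level_polys z q r (Suc j) y (Suc k) = (if Suc k < q then ?T (Suc k) else ?V0 div [:-z,1:] ^ Suc j)"
  proof (cases "Suc k < q \<or> 1 < r")
    case False
    then have r: "r = 1" and "Suc k = q" using j k by auto
    moreover have "?V0 div [:-z,1:] ^ Suc j = 0"
    proof (rule div_poly_less)
      show "degree ?V0 < degree ([:-z,1:] ^ Suc j)"
        unfolding degree_linear_power
        using r degree_poly_of_vec_less[of "vec_slice (vec_last y ((r - 1) * r)) 0 r"] by simp
    qed
    ultimately show ?thesis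
      by (simp add: level_polys_def)
  qed (use k in \<open>auto simp: level_polys_def\<close>)
  then show ?thesis
    using block_poly_vec_first_Kbar_mult_vec[OF y k j, of z] k
    by (simp add: level_polys_def del: mult_pCons_left power_Suc)
qed

lemma level_polys_Kbar_mult_vec_tail:
  assumes y: "y \<in> carrier_vec (q * (r - Suc j) + (r - 1) * r)" and k: "q \<le> k" "k < q + r - 1"
  shows "\<exists>e. level_polys z q r j (Kbar q r (q + r - 1) z j *\<^sub>v y) k =
    [:-z,1:] * level_polys z q r (Suc j) y k - level_polys z q r (Suc j) y (Suc k) + [:e:]"
proof -
  define l where "l = k - q"
  have kl: "k = q + l" and l: "l < r - 1"
    using k by (simp_all add: l_def)
  let ?y2 = "vec_last y ((r - 1) * r)"
  let ?V = "\<lambda>l. block_poly r ?y2 l"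
  have y': "y \<in> carrier_vec (q * (r - Suc j) + (q + r - 1 - q) * r)" using y by simp
  have y2: "?y2 \<in> carrier_vec ((q + r - 1 - q) * r)" by simp
  have "level_polys z q r j (Kbar q r (q + r - 1) z j *\<^sub>v y) k =
      block_poly r (Dblock q r (q + r - 1) z *\<^sub>v ?y2) l div [:-z,1:] ^ j"
    using vec_last_Kbar_mult_vec[OF y', of z] kl l by (simp add: level_polys_def)
  also have "\<dots> = ?V l div [:-z,1:] ^ j - (if Suc l < r - 1 then ?V (Suc l) div [:-z,1:] ^ Suc j else 0)"
    using block_poly_Dblock[OF y2, of l z] l
    by (simp add: poly_div_diff_left poly_div_mult_right power_Suc del: mult_pCons_left)
  finally have lhs: "level_polys z q r j (Kbar q r (q + r - 1) z j *\<^sub>v y) k =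
      ?V l div [:-z,1:] ^ j - (if Suc l < r - 1 then ?V (Suc l) div [:-z,1:] ^ Suc j else 0)" .
  obtain e where e: "?V l div [:-z,1:] ^ j = [:-z,1:] * (?V l div [:-z,1:] ^ Suc j) + [:e:]"
    using div_linear_power_eq by blast
  have "level_polys z q r (Suc j) y k = ?V l div [:-z,1:] ^ Suc j"
    and "level_polys z q r (Suc j) y (Suc k) = (if Suc l < r - 1 then ?V (Suc l) div [:-z,1:] ^ Suc j else 0)"
    using kl l by (auto simp: level_polys_def)
  then show ?thesis
    using lhs e by (intro exI[of _ e]) (simp del: mult_pCons_left power_Suc)
qed

lemma level_polys_Kbar_mult_vec:
  assumes y: "y \<in> carrier_vec (q * (r - Suc j) + (r - 1) * r)" and j: "j < r" and k: "k < q + r - 1"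
  shows "\<exists>e. level_polys z q r j (Kbar q r (q + r - 1) z j *\<^sub>v y) k =
      [:-z,1:] * level_polys z q r (Suc j) y k - level_polys z q r (Suc j) y (Suc k) + [:e:]
      \<and> (k < q \<longrightarrow> e = 0)"
proof (cases "k < q")
  case True
  then show ?thesis
    using level_polys_Kbar_mult_vec_head[OF y j True, of z] by (intro exI[of _ 0]) simp
next
  case False
  then show ?thesis
    using level_polys_Kbar_mult_vec_tail[OF y _ k, of z] by simp
qed

lemma hasse_pairing_level_polys_Kbar_mult_vec:
  assumes y: "y \<in> carrier_vec (q * (r - Suc j) + (r - 1) * r)" and a: "a < q"
  shows "hasse_pairing (q + r - 1) (level_polys z q r j (Kbar q r (q + r - 1) z j *\<^sub>v y)) ([:0,1:] ^ a) =
    [:-z,1:] * hasse_pairing (q + r - 1) (level_polys z q r (Suc j) y) ([:0,1:] ^ a)"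
proof (cases "j < r")
  case False
  then show ?thesis by (simp add: hasse_pairing_def level_polys_eq_0)
next
  case True
  let ?K = "q + r - 1" and ?U = "level_polys z q r (Suc j) y" and ?p = "[:0,1:] ^ a :: complex poly"
  have "\<forall>k. \<exists>e. k < ?K \<longrightarrow> level_polys z q r j (Kbar q r ?K z j *\<^sub>v y) k =
      [:-z,1:] * ?U k - ?U (Suc k) + [:e:] \<and> (k < q \<longrightarrow> e = 0)"
    using level_polys_Kbar_mult_vec[OF y True] by blast
  then obtain e where e: "\<forall>k. k < ?K \<longrightarrow> level_polys z q r j (Kbar q r ?K z j *\<^sub>v y) k =
      [:-z,1:] * ?U k - ?U (Suc k) + [:e k:] \<and> (k < q \<longrightarrow> e k = 0)"
    unfolding choice_iff by blast
  have "hasse_pairing ?K (level_polys z q r j (Kbar q r ?K z j *\<^sub>v y)) ?p =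
      hasse_pairing ?K (\<lambda>k. [:-z,1:] * ?U k - ?U (Suc k) + [:e k:]) ?p"
    unfolding hasse_pairing_def using e by (intro sum.cong) auto
  also have "\<dots> = hasse_pairing ?K (\<lambda>k. [:-z,1:] * ?U k - ?U (Suc k)) ?p + hasse_pairing ?K (\<lambda>k. [:e k:]) ?p"
    by (rule hasse_pairing_add_fun)
  also have "hasse_pairing ?K (\<lambda>k. [:e k:]) ?p = 0"
    unfolding hasse_pairing_def
  proof (intro sum.neutral ballI)
    fix k assume "k \<in> {..<?K}"
    show "hasse_deriv k (?p * [:e k:]) = 0"
    proof (cases "k < q")
      case True
      then show ?thesis using e \<open>k \<in> {..<?K}\<close> by simp
    next
      case False
      then show ?thesis
        using a degree_mult_le[of ?p "[:e k:]"] by (intro hasse_deriv_eq_0) (simp add: degree_linear_power)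
    qed
  qed
  also have "hasse_pairing ?K (\<lambda>k. [:-z,1:] * ?U k - ?U (Suc k)) ?p = [:-z,1:] * hasse_pairing ?K ?U ?p"
    by (rule hasse_pairing_telescope) (use True in \<open>simp add: level_polys_def\<close>)
  finally show ?thesis by simp
qed

lemma Kprod_carrier:
  "Kprod q r nu' z m \<in> carrier_mat (q * r + (nu' - q) * r) (q * (r - Suc m) + (nu' - q) * r)"
proof (induction m)
  case 0
  then show ?case using Kbar_carrier[of q r nu' z 0] by simp
next
  case (Suc m)
  then show ?case using Kbar_carrier[of q r nu' z "Suc m"] by (simp add: mult_carrier_mat)
qed

lemma Kprod_Suc_mult_vec:
  assumes y: "y \<in> carrier_vec (q * (r - Suc (Suc m)) + (nu' - q) * r)"
  shows "Kprod q r nu' z (Suc m) *\<^sub>v y = Kprod q r nu' z m *\<^sub>v (Kbar q r nu' z (Suc m) *\<^sub>v y)"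
  using assoc_mult_mat_vec[OF Kprod_carrier Kbar_carrier y] by simp

lemma hasse_pairing_level_polys_Kprod_mult_vec:
  assumes y: "y \<in> carrier_vec (q * (r - Suc m) + (r - 1) * r)" and a: "a < q"
  shows "hasse_pairing (q + r - 1) (level_polys z q r 0 (Kprod q r (q + r - 1) z m *\<^sub>v y)) ([:0,1:] ^ a) =
    [:-z,1:] ^ Suc m * hasse_pairing (q + r - 1) (level_polys z q r (Suc m) y) ([:0,1:] ^ a)"
  using y
proof (induction m arbitrary: y)
  case 0
  then show ?case using hasse_pairing_level_polys_Kbar_mult_vec[where j = 0 and z = z, OF _ a] by simp
next
  case (Suc m)
  have Ky: "Kbar q r (q + r - 1) z (Suc m) *\<^sub>v y \<in> carrier_vec (q * (r - Suc m) + (r - 1) * r)"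
    using Kbar_carrier[of q r "q + r - 1" z "Suc m"] Suc.prems by simp
  have y': "y \<in> carrier_vec (q * (r - Suc (Suc m)) + (q + r - 1 - q) * r)"
    using Suc.prems by simp
  show ?case
    unfolding Kprod_Suc_mult_vec[OF y'] Suc.IH[OF Ky]
      hasse_pairing_level_polys_Kbar_mult_vec[OF Suc.prems a]
    by (simp only: power_Suc2 mult.assoc)
qed

lemma linear_mult_chain_eq_0:
  fixes T :: "nat \<Rightarrow> 'a::idom poly"
  assumes chain: "\<And>k. k < n \<Longrightarrow> [:-z,1:] * T k = (if Suc k < n then T (Suc k) else 0)" and k: "k < n"
  shows "T k = 0"
  using k
proof (induction "n - k" arbitrary: k)
  case 0
  then show ?case by simp
next
  case (Suc d)
  then have "[:-z,1:] * T k = 0"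
    using chain[of k] Suc.hyps(1)[of "Suc k"] by (cases "Suc k < n") auto
  then show ?case by (simp del: mult_pCons_left)
qed

lemma block_poly_zero_div_linear_power:
  fixes z :: "'a::field"
  assumes j: "j < r"
  shows "block_poly r (0\<^sub>v ((r - 1) * r)) 0 div [:-z,1:] ^ Suc j = 0"
proof (cases "j + 2 \<le> r")
  case True
  then have "0 * r + r \<le> (r - 1) * r" by (cases r) auto
  then show ?thesis by simp
next
  case False
  \<comment> \<open>now \<open>r = j + 1\<close>; for \<open>r = 1\<close> the slice reads past the end of the empty vector,
    so only the degree bound is available\<close>
  show ?thesis
  proof (rule div_poly_less)
    have "degree (block_poly r (0\<^sub>v ((r - 1) * r) :: 'a vec) 0) < r"
      using j degree_poly_of_vec_less[of "vec_slice (0\<^sub>v ((r - 1) * r) :: 'a vec) 0 r"] by simp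
    then show "degree (block_poly r (0\<^sub>v ((r - 1) * r) :: 'a vec) 0) < degree ([:-z,1:] ^ Suc j)"
      unfolding degree_linear_power using False by linarith
  qed
qed

lemma Kbar_mult_vec_eq_0_imp:
  assumes y: "y \<in> carrier_vec (q * (r - Suc j) + (r - 1) * r)"
    and K0: "Kbar q r (q + r - 1) z j *\<^sub>v y = 0\<^sub>v (q * (r - j) + (r - 1) * r)"
  shows "y = 0\<^sub>v (q * (r - Suc j) + (r - 1) * r)"
proof -
  let ?y1 = "vec_first y (q * (r - Suc j))" and ?y2 = "vec_last y ((r - 1) * r)"
  have y': "y \<in> carrier_vec (q * (r - Suc j) + (q + r - 1 - q) * r)" using y by simp
  have "vec_last (0\<^sub>v (q * (r - j) + (r - 1) * r)) ((r - 1) * r) = (0\<^sub>v ((r - 1) * r) :: complex vec)"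
    by (intro eq_vecI) (auto simp: vec_last_def)
  then have "Dblock q r (q + r - 1) z *\<^sub>v ?y2 = 0\<^sub>v ((q + r - 1 - q) * r)"
    using vec_last_Kbar_mult_vec[OF y', of z] K0 by simp
  then have y2: "?y2 = 0\<^sub>v ((r - 1) * r)"
    using Dblock_mult_vec_eq_0_imp[of ?y2 "q + r - 1" q r z] by simp
  have y1: "?y1 = 0\<^sub>v (q * (r - Suc j))"
  proof (cases "j < r")
    case False
    then show ?thesis by (intro eq_vecI) auto
  next
    case True
    let ?T = "block_poly (r - Suc j) ?y1"
    have G0: "block_poly r ?y2 0 div [:-z,1:] ^ Suc j = 0"
      unfolding y2 by (rule block_poly_zero_div_linear_power[OF True])
    have "[:-z,1:] * ?T k = (if Suc k < q then ?T (Suc k) else 0)" if k: "k < q" for k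
    proof -
      have "block_poly (r - j) (vec_first (Kbar q r (q + r - 1) z j *\<^sub>v y) (q * (r - j))) k = 0"
        unfolding K0 using block_end_le[OF k, of "r - j"] by (simp add: vec_first_zero)
      then show ?thesis
        using block_poly_vec_first_Kbar_mult_vec[OF y k True, of z] G0
        by (auto split: if_splits simp del: mult_pCons_left power_Suc)
    qed
    then have "?T k = 0" if "k < q" for k
      using that by (rule linear_mult_chain_eq_0)
    then show ?thesis
      by (intro vec_eq_0_if_block_polys_eq_0) auto
  qed
  have "y = ?y1 @\<^sub>v ?y2" using y by simp
  also have "\<dots> = 0\<^sub>v (q * (r - Suc j) + (r - 1) * r)"
    unfolding y1 y2 by (intro eq_vecI) auto
  finally show ?thesis .
qed

lemma Kprod_mult_vec_eq_0_imp:
  assumes y: "y \<in> carrier_vec (q * (r - Suc m) + (r - 1) * r)"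
    and K0: "Kprod q r (q + r - 1) z m *\<^sub>v y = 0\<^sub>v (q * r + (r - 1) * r)"
  shows "y = 0\<^sub>v (q * (r - Suc m) + (r - 1) * r)"
  using y K0
proof (induction m arbitrary: y)
  case 0
  then show ?case using Kbar_mult_vec_eq_0_imp[of y q r 0 z] by simp
next
  case (Suc m)
  have Ky: "Kbar q r (q + r - 1) z (Suc m) *\<^sub>v y \<in> carrier_vec (q * (r - Suc m) + (r - 1) * r)"
    using Kbar_carrier[of q r "q + r - 1" z "Suc m"] Suc.prems(1) by simp
  have y': "y \<in> carrier_vec (q * (r - Suc (Suc m)) + (q + r - 1 - q) * r)"
    using Suc.prems(1) by simp
  have "Kbar q r (q + r - 1) z (Suc m) *\<^sub>v y = 0\<^sub>v (q * (r - Suc m) + (r - 1) * r)"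
    using Suc.IH[OF Ky] Suc.prems(2) unfolding Kprod_Suc_mult_vec[OF y'] by simp
  then show ?case
    using Kbar_mult_vec_eq_0_imp[OF Suc.prems(1)] by simp
qed

section \<open>The matrix N\<close>

lemma Nmat_carrier: "Nmat q r mu nu z \<in> carrier_mat (mu * q) (nu * r)"
  by (simp add: Nmat_def)

lemma Mpoly_deriv_index:
  "a < q \<Longrightarrow> b < r \<Longrightarrow> mderiv k (Mpoly q r) z $$ (a, b) = poly ((pderiv ^^ k) ([:0,1:] ^ (a + b))) z"
  by (simp add: mderiv_def Mpoly_def upoly_def wpoly_def scalar_prod_def power_add)

lemma poly_sum: "poly (sum f A) x = (\<Sum>a\<in>A. poly (f a) x)"
  by (induction A rule: infinite_finite_induct) auto

lemma Nmat_mult_vec_index: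
  assumes x: "x \<in> carrier_vec (nu * r)" and i: "i < mu" and a: "a < q"
  shows "(Nmat q r mu nu z *\<^sub>v x) $ (i * q + a) =
    poly (hasse_deriv i (hasse_pairing nu (block_poly r x) ([:0,1:] ^ a))) z"
proof -
  have row: "i * q + a < mu * q"
    using i a by (rule block_index_less)
  have "(Nmat q r mu nu z *\<^sub>v x) $ (i * q + a) = (\<Sum>c<nu * r. Nmat q r mu nu z $$ (i * q + a, c) * x $ c)"
    using x row by (subst mult_mat_vec_index) (auto simp: Nmat_def)
  also have "\<dots> = (\<Sum>k<nu. \<Sum>b<r. x $ (k * r + b) / (fact i * fact k) * poly ((pderiv ^^ (i + k)) ([:0,1:] ^ (a + b))) z)"
    unfolding sum_lessThan_mult
  proof (intro sum.cong refl)
    fix k b assume "k \<in> {..<nu}" and b: "b \<in> {..<r}"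
    then have "k * r + b < nu * r" by (simp add: block_index_less)
    then show "Nmat q r mu nu z $$ (i * q + a, k * r + b) * x $ (k * r + b) =
        x $ (k * r + b) / (fact i * fact k) * poly ((pderiv ^^ (i + k)) ([:0,1:] ^ (a + b))) z"
      using row a b by (simp add: Nmat_def Mpoly_deriv_index)
  qed
  also have "\<dots> = poly (hasse_deriv i (hasse_pairing nu (block_poly r x) ([:0,1:] ^ a))) z"
    by (simp add: hasse_pairing_def poly_of_vec_def monom_altdef sum_distrib_left hasse_deriv_sum
        hasse_deriv_smult hasse_deriv_hasse_deriv poly_sum power_add ac_simps)
  finally show ?thesis .
qed

lemma Nmat_mult_vec_eq_0_iff:
  assumes x: "x \<in> carrier_vec (nu * r)"
  shows "Nmat q r mu nu z *\<^sub>v x = 0\<^sub>v (mu * q) \<longleftrightarrow>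
    (\<forall>a<q. [:-z,1:] ^ mu dvd hasse_pairing nu (block_poly r x) ([:0,1:] ^ a))"
proof -
  have "Nmat q r mu nu z *\<^sub>v x = 0\<^sub>v (mu * q) \<longleftrightarrow> (\<forall>i<mu. \<forall>a<q. (Nmat q r mu nu z *\<^sub>v x) $ (i * q + a) = 0)"
  proof
    assume "\<forall>i<mu. \<forall>a<q. (Nmat q r mu nu z *\<^sub>v x) $ (i * q + a) = 0"
    then show "Nmat q r mu nu z *\<^sub>v x = 0\<^sub>v (mu * q)"
    proof (intro eq_vecI)
      fix c assume "\<forall>i<mu. \<forall>a<q. (Nmat q r mu nu z *\<^sub>v x) $ (i * q + a) = 0" and "c < dim_vec (0\<^sub>v (mu * q))"
      then show "(Nmat q r mu nu z *\<^sub>v x) $ c = 0\<^sub>v (mu * q) $ c"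
        by (metis index_zero_vec(1,2) less_mult_imp_div_less mod_less_divisor mult.commute
            div_mult_mod_eq neq0_conv mult_0_right less_nat_zero_code)
    qed (simp add: Nmat_def)
  qed (auto simp: block_index_less)
  also have "\<dots> \<longleftrightarrow> (\<forall>a<q. \<forall>i<mu. poly (hasse_deriv i (hasse_pairing nu (block_poly r x) ([:0,1:] ^ a))) z = 0)"
    using Nmat_mult_vec_index[OF x] by auto
  also have "\<dots> \<longleftrightarrow> (\<forall>a<q. [:-z,1:] ^ mu dvd hasse_pairing nu (block_poly r x) ([:0,1:] ^ a))"
    by (simp add: poly_hasse_deriv_eq_0_iff_dvd)
  finally show ?thesis .
qed

lemma Nmat_mult_embedding_eq_0_imp:
  assumes u: "u \<in> carrier_vec (q * m)" and qnu: "q \<le> nu" and m: "m \<le> mu" "m \<le> r" and mu: "0 < mu"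
    and N0: "Nmat q r mu nu z *\<^sub>v (kron (embed_mat nu q) (embed_mat r m) *\<^sub>v u) = 0\<^sub>v (mu * q)"
  shows "u = 0\<^sub>v (q * m)"
proof -
  let ?E = "kron (embed_mat nu q) (embed_mat r m) :: complex mat" and ?U = "block_poly m u"
  have "?E \<in> carrier_mat (nu * r) (q * m)"
    by (intro kron_carrier_mat) (simp_all add: embed_mat_def)
  then have Eu: "?E *\<^sub>v u \<in> carrier_vec (nu * r)" using u by simp
  have blocks: "block_poly r (?E *\<^sub>v u) k = (if k < q then ?U k else 0)" if "k < nu" for k
    using block_poly_kron_embed_mat[OF u m(2) that] .
  have pairing: "hasse_pairing nu (block_poly r (?E *\<^sub>v u)) p = hasse_pairing q ?U p" for p
  proof -
    have "hasse_pairing nu (block_poly r (?E *\<^sub>v u)) p = hasse_pairing q (block_poly r (?E *\<^sub>v u)) p"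
      by (rule hasse_pairing_truncate[OF qnu]) (simp add: blocks)
    also have "\<dots> = hasse_pairing q ?U p"
      unfolding hasse_pairing_def using qnu by (intro sum.cong) (auto simp: blocks)
    finally show ?thesis .
  qed
  have "\<forall>a<q. [:-z,1:] ^ mu dvd hasse_pairing q ?U ([:0,1:] ^ a)"
    using N0 Nmat_mult_vec_eq_0_iff[OF Eu] pairing by simp
  then have "\<forall>p. degree p < q \<longrightarrow> [:-z,1:] ^ mu dvd hasse_pairing q ?U p"
    using hasse_pairing_dvd_if_dvd_monomials by blast
  moreover have "\<forall>k<q. degree (?U k) < mu"
  proof (intro allI impI)
    fix k
    show "degree (?U k) < mu"
    proof (cases "m = 0")
      case True
      then show ?thesis using mu by (simp add: poly_of_vec_empty)
    next
      case False
      then show ?thesis using degree_poly_of_vec_less[of "vec_slice u (k * m) m"] m by simp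
    qed
  qed
  ultimately have "\<forall>k<q. ?U k = 0"
    by (intro hasse_pairing_dvd_imp_eq_0)
  then show ?thesis
    by (intro vec_eq_0_if_block_polys_eq_0[OF u]) auto
qed

section \<open>Kernels with a complement\<close>

lemma mult_mat_vec_surj_if_inj:
  fixes A :: "'a::field mat"
  assumes A: "A \<in> carrier_mat n n"
    and inj: "\<And>v. v \<in> carrier_vec n \<Longrightarrow> A *\<^sub>v v = 0\<^sub>v n \<Longrightarrow> v = 0\<^sub>v n"
    and x: "x \<in> carrier_vec n"
  shows "\<exists>w \<in> carrier_vec n. A *\<^sub>v w = x"
proof -
  have "det A \<noteq> 0"
    using det_0_iff_vec_prod_zero[OF A] inj by blast
  from det_non_zero_imp_unit[OF A this, unfolded Units_def, of "()"]
  obtain B where B: "B \<in> carrier_mat n n" and AB: "A * B = 1\<^sub>m n"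
    by (auto simp: ring_mat_def)
  have "A *\<^sub>v (B *\<^sub>v x) = x"
    using assoc_mult_mat_vec[OF A B x] AB x by simp
  then show ?thesis
    using B x by (intro bexI[of _ "B *\<^sub>v x"]) auto
qed

lemma rank_eq_dim_col_if_inj:
  fixes K :: "'a::field mat"
  assumes K: "K \<in> carrier_mat n c"
    and inj: "\<And>v. v \<in> carrier_vec c \<Longrightarrow> K *\<^sub>v v = 0\<^sub>v n \<Longrightarrow> v = 0\<^sub>v c"
  shows "vec_space.rank n K = c"
proof -
  have col_unit: "K *\<^sub>v unit_vec c i = col K i" if "i < c" for i
    using K that by (intro eq_vecI) auto
  have "inj_on (col K) {0..<c}"
  proof (rule inj_onI)
    fix i j assume i: "i \<in> {0..<c}" and j: "j \<in> {0..<c}" and e: "col K i = col K j"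
    have "K *\<^sub>v (unit_vec c i - unit_vec c j) = col K i - col K j"
      using i j col_unit by (simp add: mult_minus_distrib_mat_vec[OF K])
    also have "\<dots> = 0\<^sub>v n"
      using e K j by (auto intro!: eq_vecI)
    finally have "unit_vec c i - unit_vec c j = (0\<^sub>v c :: 'a vec)"
      by (intro inj) auto
    then have "(unit_vec c i - unit_vec c j :: 'a vec) $ i = 0" using i by simp
    then show "i = j" using i j by (auto split: if_splits)
  qed
  then have distinct: "distinct (cols K)"
    using K unfolding cols_def by (simp add: distinct_map)
  have "module.lin_indpt class_ring (module_vec TYPE('a) n) (set (cols K))"
  proof
    assume "module.lin_dep class_ring (module_vec TYPE('a) n) (set (cols K))"
    then obtain v where "v \<in> carrier_vec c" "v \<noteq> 0\<^sub>v c" "K *\<^sub>v v = 0\<^sub>v n"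
      using vec_space.lin_depE[OF K _ distinct] by blast
    then show False using inj by blast
  qed
  then show ?thesis
    by (rule vec_space.lin_indpt_full_rank[OF K distinct])
qed

lemma mat_kernel_eq_col_space_if_complement:
  fixes N :: "'a::field mat"
  assumes N: "N \<in> carrier_mat m n" and K: "K \<in> carrier_mat n c" and E: "E \<in> carrier_mat n d"
    and dims: "c + d = n"
    and NK: "\<And>y. y \<in> carrier_vec c \<Longrightarrow> N *\<^sub>v (K *\<^sub>v y) = 0\<^sub>v m"
    and K_inj: "\<And>y. y \<in> carrier_vec c \<Longrightarrow> K *\<^sub>v y = 0\<^sub>v n \<Longrightarrow> y = 0\<^sub>v c"
    and NE_inj: "\<And>u. u \<in> carrier_vec d \<Longrightarrow> N *\<^sub>v (E *\<^sub>v u) = 0\<^sub>v m \<Longrightarrow> u = 0\<^sub>v d"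
  shows "mat_kernel N = vec_space.col_space n K"
proof -
  let ?M = "four_block_mat K E (0\<^sub>m 0 c) (0\<^sub>m 0 d)"
  have M: "?M \<in> carrier_mat n n"
    using four_block_carrier_mat[OF K zero_carrier_mat[of 0 d]] dims by simp
  have M_mult: "?M *\<^sub>v w = K *\<^sub>v vec_first w c + E *\<^sub>v vec_last w d" if w: "w \<in> carrier_vec n" for w
    using four_block_mat_empty_rows_mult_vec[OF K E] w dims by simp
  have N_EK: "E *\<^sub>v vec_last w d = 0\<^sub>v n" if w: "w \<in> carrier_vec n" and Nw: "N *\<^sub>v (?M *\<^sub>v w) = 0\<^sub>v m" for w
  proof -
    have "N *\<^sub>v (?M *\<^sub>v w) = N *\<^sub>v (K *\<^sub>v vec_first w c) + N *\<^sub>v (E *\<^sub>v vec_last w d)"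
      unfolding M_mult[OF w] using N K E by (simp add: mult_add_distrib_mat_vec)
    then have "N *\<^sub>v (E *\<^sub>v vec_last w d) = 0\<^sub>v m"
      using Nw NK[of "vec_first w c"] N E by simp
    then show ?thesis using NE_inj[of "vec_last w d"] E by (simp add: mult_mat_vec_zero)
  qed
  have M_inj: "w = 0\<^sub>v n" if w: "w \<in> carrier_vec n" and Mw: "?M *\<^sub>v w = 0\<^sub>v n" for w
  proof -
    have E0: "E *\<^sub>v vec_last w d = 0\<^sub>v n"
      using N_EK[OF w] Mw N by (simp add: mult_mat_vec_zero)
    then have "vec_last w d = 0\<^sub>v d"
      using NE_inj[of "vec_last w d"] N by (simp add: mult_mat_vec_zero)
    moreover have "vec_first w c = 0\<^sub>v c"
      using K_inj[of "vec_first w c"] Mw E0 K unfolding M_mult[OF w] by simp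
    ultimately show ?thesis
      using w dims vec_first_last_append[of w c d] by (auto intro!: eq_vecI)
  qed
  have "x \<in> vec_space.col_space n K" if x: "x \<in> mat_kernel N" for x
  proof -
    have xc: "x \<in> carrier_vec n" and Nx: "N *\<^sub>v x = 0\<^sub>v m"
      using x N by (auto simp: mat_kernel_def)
    obtain w where w: "w \<in> carrier_vec n" and Mw: "?M *\<^sub>v w = x"
      using mult_mat_vec_surj_if_inj[OF M M_inj xc] by blast
    then have "x = K *\<^sub>v vec_first w c"
      using N_EK[OF w] Nx K unfolding M_mult[OF w] by simp
    then show ?thesis
      using xc K by (auto simp: vec_space.col_space_eq[OF K])
  qed
  moreover have "x \<in> mat_kernel N" if "x \<in> vec_space.col_space n K" for x
    using that NK N K by (auto simp: vec_space.col_space_eq[OF K] mat_kernel_def)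
  ultimately show ?thesis by blast
qed

lemma kernel_dim_eq_if_col_space:
  fixes N :: "'a::field mat"
  assumes N: "N \<in> carrier_mat m n" and K: "K \<in> carrier_mat n c"
    and ker: "mat_kernel N = vec_space.col_space n K"
    and K_inj: "\<And>y. y \<in> carrier_vec c \<Longrightarrow> K *\<^sub>v y = 0\<^sub>v n \<Longrightarrow> y = 0\<^sub>v c"
  shows "kernel_dim N = c"
proof -
  have "kernel_dim N = vec_space.rank n K"
    unfolding kernel_dim_def vec_space.rank_def vec_space.col_space_def[symmetric] ker[symmetric]
    using N by simp
  then show ?thesis
    using rank_eq_dim_col_if_inj[OF K K_inj] by simp
qed

section \<open>The kernel of N\<close>

lemma Kbarbar_row_dim:
  assumes "0 < r" and "q + r \<le> nu"
  shows "q * r + (r - 1) * r + r * (nu - q - r + 1) = nu * (r :: nat)"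
proof -
  define t where "t = nu - (q + r)"
  have nu_eq: "nu = q + r + t" using assms(2) by (simp add: t_def)
  obtain r' where "r = Suc r'" using assms(1) by (cases r) auto
  then show ?thesis unfolding nu_eq by (simp add: algebra_simps)
qed

lemma Kbarbar_cols_eq:
  assumes "0 < r" and "q + r \<le> nu"
  shows "q * (r - mu) + (r - 1) * r + r * (nu - q - r + 1) + q * min mu r = nu * (r :: nat)"
proof -
  have "r - mu + min mu r = r" by (simp add: min_def)
  then have "q * (r - mu) + q * min mu r = q * r" by (metis add_mult_distrib2)
  then show ?thesis
    using Kbarbar_row_dim[OF assms] by linarith
qed

context
  fixes q r mu nu :: nat and z :: complex
  assumes q: "0 < q" and r: "0 < r" and mu: "0 < mu" and nu: "q + r \<le> nu"
begin

lemma Kprod_mu_carrier: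
  "Kprod q r (q + r - 1) z (mu - 1) \<in> carrier_mat (q * r + (r - 1) * r) (q * (r - mu) + (r - 1) * r)"
  using Kprod_carrier[of q r "q + r - 1" z "mu - 1"] mu by simp

lemma Kbarbar_carrier:
  "Kbarbar q r mu nu z \<in> carrier_mat (nu * r) (q * (r - mu) + (r - 1) * r + r * (nu - q - r + 1))"
  using four_block_carrier_mat[OF Kprod_mu_carrier one_carrier_mat[of "r * (nu - q - r + 1)"]]
    Kprod_mu_carrier Kbarbar_row_dim[OF r nu]
  by (simp add: Kbarbar_def Let_def)

lemma Kbarbar_mult_vec:
  assumes y: "y \<in> carrier_vec (q * (r - mu) + (r - 1) * r + r * (nu - q - r + 1))"
  shows "Kbarbar q r mu nu z *\<^sub>v y =
    (Kprod q r (q + r - 1) z (mu - 1) *\<^sub>v vec_first y (q * (r - mu) + (r - 1) * r))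
    @\<^sub>v vec_last y (r * (nu - q - r + 1))"
proof -
  let ?c = "q * (r - mu) + (r - 1) * r" and ?s = "r * (nu - q - r + 1)"
  have "Kbarbar q r mu nu z *\<^sub>v y = four_block_mat (Kprod q r (q + r - 1) z (mu - 1))
      (0\<^sub>m (q * r + (r - 1) * r) ?s) (0\<^sub>m ?s ?c) (1\<^sub>m ?s) *\<^sub>v y"
    using Kprod_mu_carrier by (simp add: Kbarbar_def Let_def)
  also have "\<dots> = (Kprod q r (q + r - 1) z (mu - 1) *\<^sub>v vec_first y ?c + 0\<^sub>m (q * r + (r - 1) * r) ?s *\<^sub>v vec_last y ?s)
      @\<^sub>v (1\<^sub>m ?s *\<^sub>v vec_last y ?s)"
    by (rule four_block_mat_zero_mult_vec[OF Kprod_mu_carrier zero_carrier_mat one_carrier_mat y])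
  finally show ?thesis
    using mult_mat_vec_carrier[OF Kprod_mu_carrier vec_first_carrier] by (simp add: zero_mat_mult_vec[OF vec_last_carrier])
qed

lemma hasse_pairing_Kbarbar_mult_vec:
  assumes y: "y \<in> carrier_vec (q * (r - mu) + (r - 1) * r + r * (nu - q - r + 1))" and a: "a < q"
  shows "hasse_pairing nu (block_poly r (Kbarbar q r mu nu z *\<^sub>v y)) ([:0,1:] ^ a) =
    [:-z,1:] ^ mu * hasse_pairing (q + r - 1)
      (level_polys z q r mu (vec_first y (q * (r - mu) + (r - 1) * r))) ([:0,1:] ^ a)"
proof -
  let ?y1 = "vec_first y (q * (r - mu) + (r - 1) * r)" and ?K = "q + r - 1"
  let ?x1 = "Kprod q r ?K z (mu - 1) *\<^sub>v ?y1" and ?x = "Kbarbar q r mu nu z *\<^sub>v y"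
  have x1: "?x1 \<in> carrier_vec (q * r + (r - 1) * r)"
    using Kprod_mu_carrier by simp
  have y1: "?y1 \<in> carrier_vec (q * (r - Suc (mu - 1)) + (r - 1) * r)"
    using mu by simp
  have "hasse_pairing nu (block_poly r ?x) ([:0,1:] ^ a) = hasse_pairing ?K (block_poly r ?x) ([:0,1:] ^ a)"
  proof (rule hasse_pairing_truncate)
    fix k assume "?K \<le> k"
    moreover have "degree ([:0,1:] ^ a * block_poly r ?x k) \<le> a + degree (block_poly r ?x k)"
      using degree_mult_le[of "[:0,1:] ^ a" "block_poly r ?x k"] by (simp add: degree_linear_power)
    moreover have "degree (block_poly r ?x k) < r"
      using r degree_poly_of_vec_less[of "vec_slice ?x (k * r) r"] by simp
    ultimately show "hasse_deriv k ([:0,1:] ^ a * block_poly r ?x k) = 0"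
      using a by (intro hasse_deriv_eq_0) linarith
  qed (use nu in simp)
  also have "\<dots> = hasse_pairing ?K (level_polys z q r 0 ?x1) ([:0,1:] ^ a)"
    unfolding hasse_pairing_def
  proof (intro sum.cong refl)
    fix k assume "k \<in> {..<?K}"
    then have k: "k < ?K" by simp
    then have "k * r + r \<le> q * r + (r - 1) * r"
      using block_end_le[of k ?K r] r by (simp add: add_mult_distrib[symmetric])
    moreover have "dim_vec ?x1 = q * r + (r - 1) * r"
      using carrier_matD[OF Kprod_mu_carrier] by simp
    ultimately have "block_poly r ?x k = block_poly r ?x1 k"
      by (simp add: Kbarbar_mult_vec[OF y] vec_slice_append_left)
    then show "hasse_deriv k ([:0,1:] ^ a * block_poly r ?x k) =
        hasse_deriv k ([:0,1:] ^ a * level_polys z q r 0 ?x1 k)"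
      using level_polys_0[OF x1 k] by simp
  qed
  also have "\<dots> = [:-z,1:] ^ mu * hasse_pairing ?K (level_polys z q r mu ?y1) ([:0,1:] ^ a)"
    using hasse_pairing_level_polys_Kprod_mult_vec[OF y1 a, of z] mu by simp
  finally show ?thesis .
qed

lemma Nmat_Kbarbar_mult_vec:
  assumes y: "y \<in> carrier_vec (q * (r - mu) + (r - 1) * r + r * (nu - q - r + 1))"
  shows "Nmat q r mu nu z *\<^sub>v (Kbarbar q r mu nu z *\<^sub>v y) = 0\<^sub>v (mu * q)"
proof -
  have "Kbarbar q r mu nu z *\<^sub>v y \<in> carrier_vec (nu * r)"
    using Kbarbar_carrier y by simp
  then show ?thesis
    by (simp add: Nmat_mult_vec_eq_0_iff hasse_pairing_Kbarbar_mult_vec[OF y])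
qed

lemma Kbarbar_mult_vec_eq_0_imp:
  assumes y: "y \<in> carrier_vec (q * (r - mu) + (r - 1) * r + r * (nu - q - r + 1))"
    and K0: "Kbarbar q r mu nu z *\<^sub>v y = 0\<^sub>v (nu * r)"
  shows "y = 0\<^sub>v (q * (r - mu) + (r - 1) * r + r * (nu - q - r + 1))"
proof -
  let ?c = "q * (r - mu) + (r - 1) * r" and ?s = "r * (nu - q - r + 1)"
  let ?x1 = "Kprod q r (q + r - 1) z (mu - 1) *\<^sub>v vec_first y ?c"
  have x1: "?x1 \<in> carrier_vec (q * r + (r - 1) * r)"
    using Kprod_mu_carrier by simp
  have "?x1 @\<^sub>v vec_last y ?s = 0\<^sub>v (q * r + (r - 1) * r) @\<^sub>v 0\<^sub>v ?s"
    using K0 Kbarbar_row_dim[OF r nu] unfolding Kbarbar_mult_vec[OF y] by (auto intro!: eq_vecI)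
  then have "?x1 = 0\<^sub>v (q * r + (r - 1) * r)" and y2: "vec_last y ?s = 0\<^sub>v ?s"
    using append_vec_eq[OF x1] by auto
  then have "vec_first y ?c = 0\<^sub>v (q * (r - Suc (mu - 1)) + (r - 1) * r)"
    using Kprod_mult_vec_eq_0_imp[of "vec_first y ?c" q r "mu - 1" z] mu by simp
  then show ?thesis
    using y y2 mu vec_first_last_append[of y ?c ?s] by (auto intro!: eq_vecI)
qed

end

theorem theorem5p9:
  fixes q r mu nu :: nat and z :: complex
  assumes "q > 0" and "r > 0" and "mu > 0" and "nu \<ge> q + r"
  shows "mat_kernel (Nmat q r mu nu z) = vec_space.col_space (nu * r) (Kbarbar q r mu nu z)
    \<and> kernel_dim (Nmat q r mu nu z) = (if mu < r then nu * r - mu * q else (nu - q) * r)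
    \<and> kernel_dim (Nmat q r mu nu z) = nu * r - q * min mu r"
proof -
  let ?E = "kron (embed_mat nu q) (embed_mat r (min mu r)) :: complex mat"
  have E: "?E \<in> carrier_mat (nu * r) (q * min mu r)"
    by (intro kron_carrier_mat) (simp_all add: embed_mat_def)
  have q_nu: "q \<le> nu" using assms by simp
  have ker: "mat_kernel (Nmat q r mu nu z) = vec_space.col_space (nu * r) (Kbarbar q r mu nu z)"
    by (rule mat_kernel_eq_col_space_if_complement[OF Nmat_carrier Kbarbar_carrier[OF assms] E
          Kbarbar_cols_eq[OF assms(2,4)] Nmat_Kbarbar_mult_vec[OF assms] Kbarbar_mult_vec_eq_0_imp[OF assms]
          Nmat_mult_embedding_eq_0_imp[OF _ q_nu min.cobounded1 min.cobounded2 assms(3)]])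
  have "kernel_dim (Nmat q r mu nu z) = q * (r - mu) + (r - 1) * r + r * (nu - q - r + 1)"
    by (rule kernel_dim_eq_if_col_space[OF Nmat_carrier Kbarbar_carrier[OF assms] ker
          Kbarbar_mult_vec_eq_0_imp[OF assms]])
  then have "kernel_dim (Nmat q r mu nu z) = nu * r - q * min mu r"
    using Kbarbar_cols_eq[OF assms(2,4), of mu] by linarith
  moreover have "(if mu < r then nu * r - mu * q else (nu - q) * r) = nu * r - q * min mu r"
    by (cases "mu < r") (simp_all add: min_def mult.commute diff_mult_distrib2)
  ultimately show ?thesis
    using ker by simp
qed

end
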